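(* \[\sum_{n\ge0}p_n(1123,1211)t^n=\frac{(1-t^2)\sqrt{(1-t)(1-t-4t^2)}}{2t^2(1-3t+t^2)}-\frac{1-3t-2t^2+14t^3-15t^4+3t^5}{2t^2(1-t)^2(1-3t+t^2)}.\]
   Context: Set partitions of $[n]$ are written in canonical sequential form (restricted growth words $\pi_1\cdots\pi_n$ with $\pi_1=1$, $\pi_{i+1}\le\max(\pi_1,\dots,\pi_i)+1$). A partition contains a pattern if it has a subsequence order-isomorphic to it; $p_n(T)$ counts partitions of $[n]$ avoiding every pattern in $T$ (with $p_0=1$). The square root is the branch that is a power series with constant term $1$. *)

theory Defs
  imports "HOL-Computational_Algebra.Formal_Power_Series" "HOL-Library.Sublist"
begin

text \<open>Canonical sequential form (restricted growth word) of a set partition of [n]: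
  entries are positive, the first entry is 1, and each entry is at most one more than
  the maximum of the preceding entries.\<close>
definition rgf :: "nat list \<Rightarrow> bool" where
  "rgf w \<longleftrightarrow> (\<forall>x\<in>set w. 1 \<le> x) \<and> (w \<noteq> [] \<longrightarrow> w ! 0 = 1) \<and>
     (\<forall>i. Suc i < length w \<longrightarrow> w ! Suc i \<le> Max (set (take (Suc i) w)) + 1)"

definition order_iso :: "nat list \<Rightarrow> nat list \<Rightarrow> bool" where
  "order_iso u p \<longleftrightarrow> length u = length p \<and>
     (\<forall>i<length p. \<forall>j<length p. (u ! i < u ! j \<longleftrightarrow> p ! i < p ! j))"

definition contains :: "nat list \<Rightarrow> nat list \<Rightarrow> bool" where
  "contains w p \<longleftrightarrow> (\<exists>u. subseq u w \<and> order_iso u p)"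

definition pcount :: "nat \<Rightarrow> nat list set \<Rightarrow> nat" where
  "pcount n T = card {w. length w = n \<and> rgf w \<and> (\<forall>p\<in>T. \<not> contains w p)}"

end

theory Submission
  imports Defs
begin

text \<open>
  An avoider of length \<open>n \<ge> 2\<close> has one of three shapes: \<open>1(v+1)\<close> with \<open>v\<close> an avoider
  (the letter 1 occurs once); \<open>1(x+1)1(y+1)\<close> with \<open>xy\<close> an avoider of length \<open>n-2\<close>, \<open>x\<close>
  nonempty and \<open>y\<close> non-increasing (two 1s, the second letter is not 1; avoiding 1211 forbids
  a third 1 and avoiding 1123 forces \<open>y\<close> to be non-increasing); or a word \<open>1\<^sup>p 2\<dots>2\<close> over
  \<open>{1,2}\<close> with at most one further 1 (the second letter is 1).  The middle shape depends
  on the length \<open>d\<close> of the longest non-increasing suffix of \<open>xy\<close>, so we refine the count by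
  a catalytic variable \<open>u\<close> marking \<open>d\<close>.  This gives a functional equation with kernel
  \<open>(1-t)(1-u) + t\<^sup>2u\<^sup>2\<close>.  Instead of working with bivariate series, \<open>u\<close> is taken to be an
  arbitrary power series in \<open>t\<close>: then every identity lives in \<open>real fps\<close>, and choosing for
  \<open>u\<close> the root of the kernel given by the square root in the statement eliminates the
  unknown refined series (kernel method).
\<close>

unbundle fps_syntax

subsection \<open>Restricted growth words and the two patterns\<close>

primrec rgf_from :: "nat \<Rightarrow> nat list \<Rightarrow> bool" where
  "rgf_from m [] = True"
| "rgf_from m (a # w) = (1 \<le> a \<and> a \<le> Suc m \<and> rgf_from (max m a) w)"

lemma rgf_from_iff:
  "rgf_from m w \<longleftrightarrow> (\<forall>i<length w. 1 \<le> w!i \<and> w!i \<le> Suc (Max (insert m (set (take i w)))))"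
proof (induction w arbitrary: m)
  case Nil then show ?case by simp
next
  case (Cons a w)
  have "(\<forall>i<length (a#w). P i) \<longleftrightarrow> P 0 \<and> (\<forall>i<length w. P (Suc i))" for P
    by (auto simp: less_Suc_eq_0_disj)
  moreover have "Max (insert m (set (take (Suc i) (a#w)))) = Max (insert (max m a) (set (take i w)))" for i
    by (cases "set (take i w) = {}") (auto simp: insert_commute max.assoc max.commute)
  ultimately show ?case using Cons by simp
qed

lemma rgf_iff_rgf_from: "rgf w \<longleftrightarrow> rgf_from 0 w"
proof -
  have Max0: "Max (insert 0 (set (take (Suc i) w))) = Max (set (take (Suc i) w))"
    if "Suc i < length w" for i
  proof -
    have "set (take (Suc i) w) \<noteq> {}" using that by (cases w) auto
    then show ?thesis by (simp add: max_def)
  qed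
  show ?thesis
  proof
    assume "rgf w"
    then have a: "\<forall>x\<in>set w. 1 \<le> x" "w \<noteq> [] \<longrightarrow> w!0 = 1"
      "\<forall>i. Suc i < length w \<longrightarrow> w ! Suc i \<le> Max (set (take (Suc i) w)) + 1"
      by (auto simp: rgf_def)
    show "rgf_from 0 w" unfolding rgf_from_iff
    proof (intro allI impI)
      fix i assume i: "i < length w"
      show "1 \<le> w!i \<and> w!i \<le> Suc (Max (insert 0 (set (take i w))))"
      proof (cases i)
        case 0 then show ?thesis using a i by auto
      next
        case (Suc j) then show ?thesis using a i Max0[of j] by auto
      qed
    qed
  next
    assume "rgf_from 0 w"
    then have h: "\<forall>i<length w. 1 \<le> w!i \<and> w!i \<le> Suc (Max (insert 0 (set (take i w))))"
      by (simp add: rgf_from_iff)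
    have "\<forall>x\<in>set w. 1 \<le> x" using h by (auto simp: in_set_conv_nth)
    moreover have "w \<noteq> [] \<longrightarrow> w!0 = 1" using h[rule_format, of 0] by auto
    moreover have "\<forall>i. Suc i < length w \<longrightarrow> w ! Suc i \<le> Max (set (take (Suc i) w)) + 1"
      using h Max0 by auto
    ultimately show "rgf w" by (simp add: rgf_def)
  qed
qed

lemma rgf_from_values_1_2: "1 \<le> m \<Longrightarrow> set t \<subseteq> {1,2} \<Longrightarrow> rgf_from m t"
  by (induction t arbitrary: m) auto

lemma rgf_from_le_length: "rgf_from m w \<Longrightarrow> x \<in> set w \<Longrightarrow> x \<le> m + length w"
proof (induction w arbitrary: m)
  case (Cons a w)
  then show ?case by (auto dest!: Cons.IH)
qed simp

lemma rgf_from_pos: "rgf_from m w \<Longrightarrow> x \<in> set w \<Longrightarrow> 1 \<le> x"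
  by (induction w arbitrary: m) auto

lemma rgf_from_append: "rgf_from m (xs @ ys) \<longleftrightarrow> rgf_from m xs \<and> rgf_from (fold max xs m) ys"
  by (induction xs arbitrary: m) (auto simp: max.commute)

lemma rgf_from_map_Suc: "\<forall>x\<in>set v. 1 \<le> x \<Longrightarrow> rgf_from (Suc m) (map Suc v) \<longleftrightarrow> rgf_from m v"
  by (induction v arbitrary: m) auto

lemma fold_max_map_Suc: "fold max (map Suc xs) (Suc m) = Suc (fold max xs m)"
  by (induction xs arbitrary: m) auto

lemma rgf_from_0_hd: "rgf_from 0 w \<Longrightarrow> w \<noteq> [] \<Longrightarrow> w ! 0 = 1"
  by (cases w) auto

lemma rgf_from_0_value_occurs:
  "rgf_from 0 w \<Longrightarrow> i < length w \<Longrightarrow> 1 \<le> d \<Longrightarrow> d \<le> w!i \<Longrightarrow> \<exists>r\<le>i. w!r = d"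
proof (induction i rule: less_induct)
  case (less i)
  show ?case
  proof (cases "w!i = d")
    case True then show ?thesis by blast
  next
    case False
    define M where "M = Max (insert 0 (set (take i w)))"
    have "w!i \<le> Suc M" using less.prems(1,2) by (simp add: rgf_from_iff M_def)
    then have "d \<le> M" using False less.prems(4) by linarith
    then have "M \<noteq> 0" using less.prems(3) by linarith
    have "M \<in> insert 0 (set (take i w))" unfolding M_def by (rule Max_in) auto
    then have "M \<in> set (take i w)" using \<open>M \<noteq> 0\<close> by auto
    then obtain r where r: "r < length (take i w)" "take i w ! r = M" by (auto simp: in_set_conv_nth)
    then have "r < i" "w!r = M" "r < length w" using less.prems(2) by auto
    then obtain r' where "r' \<le> r" "w!r' = d" using less.IH[of r] less.prems \<open>d \<le> M\<close> by auto
    then show ?thesis using \<open>r < i\<close> by (intro exI[of _ r']) auto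
  qed
qed

lemma subseq_indices:
  "subseq u w \<Longrightarrow>
     \<exists>idx. sorted_wrt (<) idx \<and> (\<forall>i\<in>set idx. i < length w) \<and> u = map (nth w) idx"
proof (induction rule: list_emb.induct)
  case (list_emb_Nil ys) then show ?case by (rule exI[of _ "[]"]) simp
next
  case (list_emb_Cons xs ys y)
  then obtain idx where "sorted_wrt (<) idx" "\<forall>i\<in>set idx. i < length ys" "xs = map (nth ys) idx"
    by blast
  then show ?case by (intro exI[of _ "map Suc idx"]) (auto simp: sorted_wrt_map)
next
  case (list_emb_Cons2 x y xs ys)
  then obtain idx where "sorted_wrt (<) idx" "\<forall>i\<in>set idx. i < length ys" "xs = map (nth ys) idx"
    by blast
  then show ?case using list_emb_Cons2.hyps
    by (intro exI[of _ "0 # map Suc idx"]) (auto simp: sorted_wrt_map)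
qed

lemma subseq_map_nth:
  "sorted_wrt (<) idx \<Longrightarrow> \<forall>i\<in>set idx. i < length w \<Longrightarrow> subseq (map (nth w) idx) w"
proof (induction w arbitrary: idx)
  case Nil then show ?case by (cases idx) auto
next
  case (Cons y ys)
  have tail: "subseq (map (nth (y#ys)) r) ys"
    if "sorted_wrt (<) r" "\<forall>i\<in>set r. 0 < i \<and> i < length (y#ys)" for r
  proof -
    have eq: "map (nth (y#ys)) r = map (nth ys) (map (\<lambda>i. i - 1) r)" using that(2) by auto
    have "subseq (map (nth ys) (map (\<lambda>i. i - 1) r)) ys"
      using that by (intro Cons.IH) (auto simp: sorted_wrt_map intro!: sorted_wrt_mono_rel[of r "(<)"])
    then show ?thesis unfolding eq .
  qed
  show ?case
  proof (cases "0 \<in> set idx")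
    case True
    then obtain r where r: "idx = 0 # r" using Cons.prems(1) by (cases idx) auto
    then show ?thesis using Cons.prems tail[of r] by auto
  next
    case False
    then have "\<forall>i\<in>set idx. 0 < i" by (metis neq0_conv)
    then show ?thesis using Cons.prems tail[of idx] by (auto intro: list_emb_Cons)
  qed
qed

lemma contains_length_4:
  assumes "length p = 4"
  shows "contains w p \<longleftrightarrow>
    (\<exists>i j k l. i < j \<and> j < k \<and> k < l \<and> l < length w \<and> order_iso [w!i, w!j, w!k, w!l] p)"
proof
  assume "contains w p"
  then obtain u where u: "subseq u w" "order_iso u p" by (auto simp: contains_def)
  obtain idx where idx: "sorted_wrt (<) idx" "\<forall>i\<in>set idx. i < length w" "u = map (nth w) idx"
    using subseq_indices[OF u(1)] by blast
  have "length idx = 4" using u(2) idx(3) assms by (simp add: order_iso_def)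
  then have "idx = [idx!0, idx!1, idx!2, idx!3]"
    by (auto intro!: nth_equalityI simp: numeral_eq_Suc less_Suc_eq)
  then obtain i j k l where "idx = [i,j,k,l]" by blast
  then show "\<exists>i j k l. i < j \<and> j < k \<and> k < l \<and> l < length w \<and> order_iso [w!i, w!j, w!k, w!l] p"
    using idx u by auto
next
  assume "\<exists>i j k l. i < j \<and> j < k \<and> k < l \<and> l < length w \<and> order_iso [w!i, w!j, w!k, w!l] p"
  then obtain i j k l where h: "i < j" "j < k" "k < l" "l < length w"
    "order_iso [w!i, w!j, w!k, w!l] p" by blast
  have "subseq (map (nth w) [i,j,k,l]) w" using h by (intro subseq_map_nth) auto
  then show "contains w p" using h unfolding contains_def by auto
qed

definition has_1123 :: "nat list \<Rightarrow> bool" where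
  "has_1123 w \<longleftrightarrow> (\<exists>i j k l. i < j \<and> j < k \<and> k < l \<and> l < length w \<and>
     w!i = w!j \<and> w!j < w!k \<and> w!k < w!l)"

definition has_1211 :: "nat list \<Rightarrow> bool" where
  "has_1211 w \<longleftrightarrow> (\<exists>i j k l. i < j \<and> j < k \<and> k < l \<and> l < length w \<and>
     w!i < w!j \<and> w!k = w!i \<and> w!l = w!i)"

lemma all_less_4: "(\<forall>i<Suc (Suc (Suc (Suc 0))). P i) \<longleftrightarrow> P 0 \<and> P 1 \<and> P 2 \<and> P 3"
  by (auto simp: numeral_eq_Suc less_Suc_eq)

lemma contains_1123_iff: "contains w [1,1,2,3] \<longleftrightarrow> has_1123 w"
proof -
  have "order_iso [a,b,c,d] [1,1,2,3] \<longleftrightarrow> a = b \<and> b < c \<and> c < d" for a b c d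
    by (simp add: order_iso_def all_less_4) (auto simp: nth_Cons')
  then show ?thesis by (simp add: contains_length_4 has_1123_def)
qed

lemma contains_1211_iff: "contains w [1,2,1,1] \<longleftrightarrow> has_1211 w"
proof -
  have "order_iso [a,b,c,d] [1,2,1,1] \<longleftrightarrow> a < b \<and> c = a \<and> d = a" for a b c d
    by (simp add: order_iso_def all_less_4) (auto simp: nth_Cons')
  then show ?thesis by (simp add: contains_length_4 has_1211_def)
qed

lemma has_patterns_embedding:
  assumes mono: "\<And>a b. a < b \<Longrightarrow> b < length v \<Longrightarrow> f a < f b"
    and val: "\<And>a. a < length v \<Longrightarrow> f a < length w \<and> w!(f a) = Suc (v!a)"
  shows "(has_1123 v \<longrightarrow> has_1123 w) \<and> (has_1211 v \<longrightarrow> has_1211 w)"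
proof (intro conjI impI)
  assume "has_1123 v"
  then obtain i j k l where h: "i < j" "j < k" "k < l" "l < length v"
    "v!i = v!j" "v!j < v!k" "v!k < v!l"
    unfolding has_1123_def by blast
  have "f i < f j" "f j < f k" "f k < f l" "f l < length w" using h mono val by auto
  moreover have "w!(f i) = w!(f j)" "w!(f j) < w!(f k)" "w!(f k) < w!(f l)"
    using h val[of i] val[of j] val[of k] val[of l] by auto
  ultimately show "has_1123 w" unfolding has_1123_def by blast
next
  assume "has_1211 v"
  then obtain i j k l where h: "i < j" "j < k" "k < l" "l < length v"
    "v!i < v!j" "v!k = v!i" "v!l = v!i"
    unfolding has_1211_def by blast
  have "f i < f j" "f j < f k" "f k < f l" "f l < length w" using h mono val by auto
  moreover have "w!(f i) < w!(f j)" "w!(f k) = w!(f i)" "w!(f l) = w!(f i)"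
    using h val[of i] val[of j] val[of k] val[of l] by auto
  ultimately show "has_1211 w" unfolding has_1211_def by blast
qed

definition avoids :: "nat list \<Rightarrow> bool" where
  "avoids w \<longleftrightarrow> rgf_from 0 w \<and> \<not> has_1123 w \<and> \<not> has_1211 w"

definition avoiders :: "nat \<Rightarrow> nat list set" where
  "avoiders n = {w. length w = n \<and> avoids w}"

lemma pcount_eq_card_avoiders: "pcount n {[1,1,2,3], [1,2,1,1]} = card (avoiders n)"
  unfolding pcount_def avoiders_def avoids_def
  by (simp add: rgf_iff_rgf_from contains_1123_iff[simplified] contains_1211_iff[simplified])

lemma finite_avoiders: "finite (avoiders n)"
proof (rule finite_subset)
  show "avoiders n \<subseteq> {xs. set xs \<subseteq> {..n} \<and> length xs = n}"
    by (auto simp: avoiders_def avoids_def dest: rgf_from_le_length)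
qed (rule finite_lists_length_eq, simp)

lemma avoiders_pos: "v \<in> avoiders m \<Longrightarrow> \<forall>a\<in>set v. 1 \<le> a"
  by (auto simp: avoiders_def avoids_def dest: rgf_from_pos)

lemma replicate_1_in_avoiders: "replicate k 1 \<in> avoiders k"
proof -
  have "rgf_from (Suc m) (replicate k 1)" for m by (induction k) auto
  then have "rgf_from 0 (replicate k 1)" by (cases k) auto
  moreover have "\<not> has_1123 (replicate k 1)" "\<not> has_1211 (replicate k 1)"
    by (auto simp: has_1123_def has_1211_def)
  ultimately show ?thesis by (simp add: avoiders_def avoids_def)
qed

lemma avoiders_0: "avoiders 0 = {[]}"
  by (auto simp: avoiders_def avoids_def has_1123_def has_1211_def)

lemma avoiders_1: "avoiders 1 = {[1]}"
proof
  show "{[1]} \<subseteq> avoiders 1" using replicate_1_in_avoiders[of 1] by simp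
  show "avoiders 1 \<subseteq> {[1]}"
  proof
    fix w assume "w \<in> avoiders 1"
    then have "length w = 1" "rgf_from 0 w" by (auto simp: avoiders_def avoids_def)
    then obtain a where "w = [a]" "1 \<le> a" "a \<le> 1" by (cases w) auto
    then show "w \<in> {[1]}" by simp
  qed
qed

lemma has_patterns_Cons_Suc:
  assumes pos: "\<forall>x\<in>set v. 1 \<le> x"
  shows "has_1123 (1 # map Suc v) \<longleftrightarrow> has_1123 v" "has_1211 (1 # map Suc v) \<longleftrightarrow> has_1211 v"
proof -
  let ?w = "1 # map Suc v"
  have lift: "(has_1123 v \<longrightarrow> has_1123 ?w) \<and> (has_1211 v \<longrightarrow> has_1211 ?w)"
    by (rule has_patterns_embedding[where f=Suc]) auto
  have wp: "?w ! p = Suc (v ! (p - 1))" if "0 < p" "p < length ?w" for p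
    using that by (cases p) auto
  have big: "2 \<le> ?w ! p" if "0 < p" "p < length ?w" for p
    using wp[OF that] pos that nth_mem[of "p - 1" v] by auto
  show "has_1123 ?w \<longleftrightarrow> has_1123 v"
  proof
    assume "has_1123 ?w"
    then obtain i j k l where h: "i < j" "j < k" "k < l" "l < length ?w"
      "?w!i = ?w!j" "?w!j < ?w!k" "?w!k < ?w!l"
      unfolding has_1123_def by blast
    have "i \<noteq> 0"
    proof
      assume "i = 0"
      with h big[of j] show False by simp
    qed
    then have "i - 1 < j - 1" "j - 1 < k - 1" "k - 1 < l - 1" "l - 1 < length v"
      "v!(i-1) = v!(j-1)" "v!(j-1) < v!(k-1)" "v!(k-1) < v!(l-1)"
      using h wp[of i] wp[of j] wp[of k] wp[of l] by auto
    then show "has_1123 v" unfolding has_1123_def by blast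
  qed (use lift in blast)
  show "has_1211 ?w \<longleftrightarrow> has_1211 v"
  proof
    assume "has_1211 ?w"
    then obtain i j k l where h: "i < j" "j < k" "k < l" "l < length ?w"
      "?w!i < ?w!j" "?w!k = ?w!i" "?w!l = ?w!i"
      unfolding has_1211_def by blast
    have "i \<noteq> 0"
    proof
      assume "i = 0"
      with h big[of k] show False by simp
    qed
    then have "i - 1 < j - 1" "j - 1 < k - 1" "k - 1 < l - 1" "l - 1 < length v"
      "v!(i-1) < v!(j-1)" "v!(k-1) = v!(i-1)" "v!(l-1) = v!(i-1)"
      using h wp[of i] wp[of j] wp[of k] wp[of l] by auto
    then show "has_1211 v" unfolding has_1211_def by blast
  qed (use lift in blast)
qed

lemma avoids_Cons_Suc: "\<forall>x\<in>set v. 1 \<le> x \<Longrightarrow> avoids (1 # map Suc v) \<longleftrightarrow> avoids v"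
  unfolding avoids_def using has_patterns_Cons_Suc[of v] rgf_from_map_Suc[of v 0] by simp

subsection \<open>The longest non-increasing suffix\<close>

definition noninc :: "nat list \<Rightarrow> bool" where
  "noninc xs \<longleftrightarrow> sorted_wrt (\<lambda>a b. b \<le> a) xs"

definition noninc_suffix :: "nat list \<Rightarrow> nat" where
  "noninc_suffix w = (GREATEST m. m \<le> length w \<and> noninc (drop (length w - m) w))"

lemma noninc_suffix_props:
  "noninc_suffix w \<le> length w \<and> noninc (drop (length w - noninc_suffix w) w)"
  unfolding noninc_suffix_def
  by (rule GreatestI_nat[of _ 0 "length w"]) (auto simp: noninc_def)

lemma noninc_suffix_le: "noninc_suffix w \<le> length w"
  using noninc_suffix_props by blast

lemma noninc_drop_iff: "j \<le> length w \<Longrightarrow> noninc (drop (length w - j) w) \<longleftrightarrow> j \<le> noninc_suffix w"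
proof
  assume "j \<le> length w" "noninc (drop (length w - j) w)"
  then show "j \<le> noninc_suffix w"
    unfolding noninc_suffix_def by (intro Greatest_le_nat[of _ j "length w"]) auto
next
  assume j: "j \<le> length w" "j \<le> noninc_suffix w"
  have "drop (length w - j) w = drop (noninc_suffix w - j) (drop (length w - noninc_suffix w) w)"
    using j noninc_suffix_le[of w] by (simp add: drop_drop)
  then show "noninc (drop (length w - j) w)"
    using noninc_suffix_props[of w] sorted_wrt_drop unfolding noninc_def by metis
qed

lemma noninc_suffix_eqI:
  assumes "m \<le> length w" "noninc (drop (length w - m) w)"
    "m < length w \<Longrightarrow> \<not> noninc (drop (length w - Suc m) w)"
  shows "noninc_suffix w = m"
proof -
  have "m \<le> noninc_suffix w" using assms noninc_drop_iff by blast
  moreover have "\<not> m < noninc_suffix w"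
    using assms(3) noninc_drop_iff[of "Suc m" w] noninc_suffix_le[of w] by auto
  ultimately show ?thesis by simp
qed

lemma noninc_map_Suc: "noninc (map Suc xs) \<longleftrightarrow> noninc xs"
  by (simp add: noninc_def sorted_wrt_map)

lemma noninc_suffix_map_Suc: "noninc_suffix (map Suc xs) = noninc_suffix xs"
proof (rule noninc_suffix_eqI)
  show "noninc_suffix xs \<le> length (map Suc xs)" using noninc_suffix_le[of xs] by simp
  show "noninc (drop (length (map Suc xs) - noninc_suffix xs) (map Suc xs))"
    using noninc_suffix_props[of xs] by (simp add: drop_map noninc_map_Suc)
  show "\<not> noninc (drop (length (map Suc xs) - Suc (noninc_suffix xs)) (map Suc xs))"
    if "noninc_suffix xs < length (map Suc xs)"
    using that noninc_drop_iff[of "Suc (noninc_suffix xs)" xs] by (simp add: drop_map noninc_map_Suc)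
qed

lemma noninc_suffix_Cons_less:
  assumes ne: "xs \<noteq> []" and a: "a < hd xs"
  shows "noninc_suffix (a # xs) = noninc_suffix xs"
proof (rule noninc_suffix_eqI)
  show "noninc_suffix xs \<le> length (a # xs)" using noninc_suffix_le[of xs] by simp
  have "length (a # xs) - noninc_suffix xs = Suc (length xs - noninc_suffix xs)"
    using noninc_suffix_le[of xs] by simp
  then show "noninc (drop (length (a # xs) - noninc_suffix xs) (a # xs))"
    using noninc_suffix_props[of xs] by simp
  show "\<not> noninc (drop (length (a # xs) - Suc (noninc_suffix xs)) (a # xs))"
  proof (cases "noninc_suffix xs < length xs")
    case True
    then have "length xs - noninc_suffix xs = Suc (length xs - Suc (noninc_suffix xs))" by arith
    then show ?thesis using True noninc_drop_iff[of "Suc (noninc_suffix xs)" xs] by simp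
  next
    case False
    then have "drop (length (a # xs) - Suc (noninc_suffix xs)) (a # xs) = a # xs"
      using noninc_suffix_le[of xs] by simp
    moreover have "\<not> noninc (a # xs)" using ne a by (cases xs) (auto simp: noninc_def)
    ultimately show ?thesis by simp
  qed
qed

lemma noninc_suffix_snoc:
  assumes h: "\<forall>x\<in>set xs. a \<le> x"
  shows "noninc_suffix (xs @ [a]) = Suc (noninc_suffix xs)"
proof (rule noninc_suffix_eqI)
  show "Suc (noninc_suffix xs) \<le> length (xs @ [a])" using noninc_suffix_le[of xs] by simp
  have "drop (length (xs @ [a]) - Suc (noninc_suffix xs)) (xs @ [a])
      = drop (length xs - noninc_suffix xs) xs @ [a]"
    using noninc_suffix_le[of xs] by simp
  moreover have "noninc (drop (length xs - noninc_suffix xs) xs @ [a])"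
    using noninc_suffix_props[of xs] h
    by (auto simp: noninc_def sorted_wrt_append dest: in_set_dropD)
  ultimately show "noninc (drop (length (xs @ [a]) - Suc (noninc_suffix xs)) (xs @ [a]))" by simp
  assume "Suc (noninc_suffix xs) < length (xs @ [a])"
  then have lt: "noninc_suffix xs < length xs" by simp
  have "drop (length (xs @ [a]) - Suc (Suc (noninc_suffix xs))) (xs @ [a])
      = drop (length xs - Suc (noninc_suffix xs)) xs @ [a]"
    using lt by simp
  moreover have "\<not> noninc (drop (length xs - Suc (noninc_suffix xs)) xs)"
    using lt noninc_drop_iff[of "Suc (noninc_suffix xs)" xs] by simp
  ultimately show "\<not> noninc (drop (length (xs @ [a]) - Suc (Suc (noninc_suffix xs))) (xs @ [a]))"
    by (simp add: noninc_def sorted_wrt_append)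
qed

lemma noninc_suffix_append:
  assumes "xs \<noteq> []" "ys \<noteq> []" "noninc ys" "last xs < hd ys"
  shows "noninc_suffix (xs @ ys) = length ys"
proof (rule noninc_suffix_eqI)
  show "length ys \<le> length (xs @ ys)" by simp
  show "noninc (drop (length (xs @ ys) - length ys) (xs @ ys))" using assms by simp
  have "drop (length xs - 1) xs = [last xs]"
    using assms(1) by (cases xs rule: rev_cases) auto
  then have "drop (length (xs @ ys) - Suc (length ys)) (xs @ ys) = last xs # ys"
    using assms(1) by simp
  moreover have "\<not> noninc (last xs # ys)" using assms by (cases ys) (auto simp: noninc_def)
  ultimately show "\<not> noninc (drop (length (xs @ ys) - Suc (length ys)) (xs @ ys))" by simp
qed

lemma noninc_suffix_after_ascent:
  assumes "0 < k" "k < length w" "w ! (k - 1) < w ! k" "noninc (drop k w)"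
  shows "noninc_suffix w = length w - k"
proof -
  have "last (take k w) = w ! (k - 1)" using assms by (cases k) (auto simp: take_Suc_conv_app_nth)
  then have "noninc_suffix (take k w @ drop k w) = length (drop k w)"
    using assms by (intro noninc_suffix_append) (auto simp: hd_drop_conv_nth)
  then show ?thesis by simp
qed

lemma noninc_suffix_Nil: "noninc_suffix [] = 0"
  using noninc_suffix_le[of "[]"] by simp

lemma noninc_suffix_singleton: "noninc_suffix [a] = 1"
  using noninc_suffix_snoc[of "[]" a] by (simp add: noninc_suffix_Nil)

lemma noninc_suffix_replicate: "noninc_suffix (replicate n (1::nat)) = n"
  by (rule noninc_suffix_eqI) (auto simp: noninc_def sorted_wrt_iff_nth_less)

lemma noninc_suffix_eq_length_imp_replicate:
  assumes r: "rgf_from 0 v" and d: "noninc_suffix v = length v"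
  shows "v = replicate (length v) 1"
proof (rule nth_equalityI)
  have dv: "noninc v" using noninc_suffix_props[of v] d by simp
  fix i assume i: "i < length v"
  then have "v ! 0 = 1" using rgf_from_0_hd[OF r] by (cases v) auto
  moreover have "v ! i \<le> v ! 0" using dv i by (cases i) (auto simp: noninc_def sorted_wrt_iff_nth_less)
  moreover have "1 \<le> v!i" using rgf_from_pos[OF r] i by auto
  ultimately show "v ! i = replicate (length v) 1 ! i" using i by simp
qed simp

lemma avoiders_with_full_noninc_suffix: "{v \<in> avoiders m. noninc_suffix v = m} = {replicate m 1}"
proof
  show "{replicate m 1} \<subseteq> {v \<in> avoiders m. noninc_suffix v = m}"
    using replicate_1_in_avoiders[of m] noninc_suffix_replicate[of m] by simp
  show "{v \<in> avoiders m. noninc_suffix v = m} \<subseteq> {replicate m 1}"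
    using noninc_suffix_eq_length_imp_replicate by (auto simp: avoiders_def avoids_def)
qed

subsection \<open>Avoiders with exactly two 1s\<close>

definition glue_ones :: "nat list \<Rightarrow> nat list \<Rightarrow> nat list" where
  "glue_ones x y = 1 # map Suc x @ 1 # map Suc y"

lemma rgf_from_glue_ones:
  assumes pos: "\<forall>a\<in>set (x @ y). 1 \<le> a"
  shows "rgf_from 0 (glue_ones x y) \<longleftrightarrow> rgf_from 0 (x @ y)"
proof -
  have "rgf_from 0 (glue_ones x y) \<longleftrightarrow>
      rgf_from (Suc 0) (map Suc x) \<and> rgf_from (fold max (map Suc x) (Suc 0)) (1 # map Suc y)"
    by (simp add: glue_ones_def rgf_from_append)
  also have "\<dots> \<longleftrightarrow> rgf_from 0 x \<and> rgf_from (Suc (fold max x 0)) (map Suc y)"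
    using pos by (simp add: fold_max_map_Suc rgf_from_map_Suc)
  also have "\<dots> \<longleftrightarrow> rgf_from 0 (x @ y)"
    using pos by (simp add: rgf_from_map_Suc rgf_from_append)
  finally show ?thesis .
qed

context
  fixes x y :: "nat list"
  assumes pos: "\<forall>a\<in>set (x @ y). 1 \<le> a"
begin

text \<open>The position in \<open>x @ y\<close> of the letter at a non-1 position \<open>p\<close> of \<open>glue_ones x y\<close>.\<close>

definition unglue_index :: "nat \<Rightarrow> nat" where
  "unglue_index p = (if p \<le> length x then p - 1 else p - 2)"

lemma length_glue_ones: "length (glue_ones x y) = length (x @ y) + 2"
  by (simp add: glue_ones_def)

lemma glue_ones_nth:
  assumes p: "p < length (glue_ones x y)"
  shows "glue_ones x y ! p =
    (if p = 0 \<or> p = Suc (length x) then 1 else Suc ((x @ y) ! unglue_index p))"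
proof -
  have w: "glue_ones x y = (1 # map Suc x) @ (1 # map Suc y)" by (simp add: glue_ones_def)
  show ?thesis
  proof (cases "p \<le> length x")
    case True
    then show ?thesis unfolding w unglue_index_def by (cases p) (auto simp: nth_append)
  next
    case False
    then obtain r where r: "p = Suc (length x) + r"
      by (metis add_Suc less_imp_Suc_add not_le_imp_less)
    then show ?thesis using p unfolding w unglue_index_def
      by (cases r) (auto simp: nth_append glue_ones_def)
  qed
qed

lemma unglue_index_less:
  "p < length (glue_ones x y) \<Longrightarrow> \<not> (p = 0 \<or> p = Suc (length x)) \<Longrightarrow>
    unglue_index p < length (x @ y)"
  by (auto simp: unglue_index_def length_glue_ones)

lemma unglue_index_mono:
  "p < p' \<Longrightarrow> \<not> (p = 0 \<or> p = Suc (length x)) \<Longrightarrow> \<not> (p' = 0 \<or> p' = Suc (length x)) \<Longrightarrow>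
    unglue_index p < unglue_index p'"
  by (auto simp: unglue_index_def)

lemma glue_ones_eq_1_iff:
  assumes p: "p < length (glue_ones x y)"
  shows "glue_ones x y ! p = 1 \<longleftrightarrow> p = 0 \<or> p = Suc (length x)"
proof -
  have "1 \<le> (x @ y) ! unglue_index p" if "\<not> (p = 0 \<or> p = Suc (length x))"
    using pos nth_mem[OF unglue_index_less[OF p that]] by blast
  then show ?thesis using glue_ones_nth[OF p] by auto
qed

lemma glue_ones_pos: "p < length (glue_ones x y) \<Longrightarrow> 1 \<le> glue_ones x y ! p"
  using glue_ones_nth[of p] glue_ones_eq_1_iff[of p] by (cases "glue_ones x y ! p") auto

lemma has_patterns_glue_ones_lift:
  "(has_1123 (x @ y) \<longrightarrow> has_1123 (glue_ones x y)) \<and> (has_1211 (x @ y) \<longrightarrow> has_1211 (glue_ones x y))"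
proof (rule has_patterns_embedding[where f = "\<lambda>q. if q < length x then Suc q else q + 2"])
  fix a assume "a < length (x @ y)"
  then show "(if a < length x then Suc a else a + 2) < length (glue_ones x y) \<and>
        glue_ones x y ! (if a < length x then Suc a else a + 2) = Suc ((x @ y) ! a)"
    using glue_ones_nth[of "if a < length x then Suc a else a + 2"]
    by (auto simp: length_glue_ones unglue_index_def)
qed auto

lemma has_1123_glue_ones: "has_1123 (glue_ones x y) \<longleftrightarrow> has_1123 (x @ y) \<or> \<not> noninc y"
proof
  assume "has_1123 (glue_ones x y)"
  then obtain i j k l where h: "i < j" "j < k" "k < l" "l < length (glue_ones x y)"
    "glue_ones x y!i = glue_ones x y!j" "glue_ones x y!j < glue_ones x y!k"
    "glue_ones x y!k < glue_ones x y!l"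
    unfolding has_1123_def by blast
  show "has_1123 (x @ y) \<or> \<not> noninc y"
  proof (cases "glue_ones x y ! i = 1")
    case True
    \<comment> \<open>the two equal letters are the two 1s, so the other two lie in the \<open>y\<close> part\<close>
    then have "i = 0 \<or> i = Suc (length x)" "j = 0 \<or> j = Suc (length x)"
      using h glue_ones_eq_1_iff by auto
    then have ij: "i = 0" "j = Suc (length x)" using h by auto
    have "\<not> k \<le> length x" "\<not> l \<le> length x" "\<not> k - 2 < length x" "\<not> l - 2 < length x"
      "k \<noteq> Suc (length x)" "l \<noteq> Suc (length x)"
      using h ij by auto
    then have "glue_ones x y ! k = Suc (y ! (k - 2 - length x))"
      "glue_ones x y ! l = Suc (y ! (l - 2 - length x))"
      using glue_ones_nth[of k] glue_ones_nth[of l] h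
      unfolding unglue_index_def by (simp_all add: nth_append)
    then have "y ! (k - 2 - length x) < y ! (l - 2 - length x)" "k - 2 - length x < l - 2 - length x"
      "l - 2 - length x < length y" using h ij by (auto simp: length_glue_ones)
    then have "\<not> noninc y" unfolding noninc_def sorted_wrt_iff_nth_less by fastforce
    then show ?thesis by simp
  next
    case False
    have not1: "\<not> (p = 0 \<or> p = Suc (length x))" if "p \<in> {i,j,k,l}" for p
    proof -
      have "glue_ones x y ! p \<noteq> 1" using that h False glue_ones_pos[of i] by auto
      then show ?thesis using glue_ones_eq_1_iff[of p] that h by auto
    qed
    have "unglue_index i < unglue_index j" "unglue_index j < unglue_index k"
      "unglue_index k < unglue_index l" "unglue_index l < length (x @ y)"
      using unglue_index_mono not1 h unglue_index_less by auto
    moreover have "(x@y) ! unglue_index i = (x@y) ! unglue_index j"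
      "(x@y) ! unglue_index j < (x@y) ! unglue_index k"
      "(x@y) ! unglue_index k < (x@y) ! unglue_index l"
      using h glue_ones_nth[of i] glue_ones_nth[of j] glue_ones_nth[of k] glue_ones_nth[of l] not1
      by auto
    ultimately show ?thesis unfolding has_1123_def by blast
  qed
next
  assume "has_1123 (x @ y) \<or> \<not> noninc y"
  then show "has_1123 (glue_ones x y)"
  proof
    assume "\<not> noninc y"
    then obtain a b where ab: "a < b" "b < length y" "y ! a < y ! b"
      unfolding noninc_def sorted_wrt_iff_nth_less by (auto simp: not_le)
    let ?k = "length x + 2 + a" and ?l = "length x + 2 + b"
    have "glue_ones x y ! ?k = Suc (y ! a)" "glue_ones x y ! ?l = Suc (y ! b)"
      using glue_ones_nth[of ?k] glue_ones_nth[of ?l] ab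
      by (auto simp: length_glue_ones unglue_index_def nth_append)
    moreover have "glue_ones x y ! 0 = 1" "glue_ones x y ! Suc (length x) = 1"
      using glue_ones_eq_1_iff by (auto simp: length_glue_ones)
    moreover have "1 \<le> y ! a" using pos ab nth_mem[of a y] by auto
    ultimately show ?thesis unfolding has_1123_def using ab
      by (intro exI[of _ 0] exI[of _ "Suc (length x)"] exI[of _ ?k] exI[of _ ?l])
        (auto simp: length_glue_ones)
  qed (use has_patterns_glue_ones_lift in blast)
qed

lemma has_1211_glue_ones: "has_1211 (glue_ones x y) \<longleftrightarrow> has_1211 (x @ y)"
proof
  assume "has_1211 (glue_ones x y)"
  then obtain i j k l where h: "i < j" "j < k" "k < l" "l < length (glue_ones x y)"
    "glue_ones x y!i < glue_ones x y!j" "glue_ones x y!k = glue_ones x y!i"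
    "glue_ones x y!l = glue_ones x y!i"
    unfolding has_1211_def by blast
  \<comment> \<open>the repeated letter occurs three times, so it is not 1\<close>
  have "glue_ones x y ! i \<noteq> 1"
  proof
    assume "glue_ones x y ! i = 1"
    then have "i = 0 \<or> i = Suc (length x)" "k = 0 \<or> k = Suc (length x)"
      "l = 0 \<or> l = Suc (length x)"
      using h glue_ones_eq_1_iff by auto
    then show False using h by auto
  qed
  have not1: "\<not> (p = 0 \<or> p = Suc (length x))" if "p \<in> {i,j,k,l}" for p
  proof -
    have "glue_ones x y ! p \<noteq> 1"
      using that h \<open>glue_ones x y ! i \<noteq> 1\<close> glue_ones_pos[of i] by auto
    then show ?thesis using glue_ones_eq_1_iff[of p] that h by auto
  qed
  have "unglue_index i < unglue_index j" "unglue_index j < unglue_index k"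
    "unglue_index k < unglue_index l" "unglue_index l < length (x @ y)"
    using unglue_index_mono not1 h unglue_index_less by auto
  moreover have "(x@y) ! unglue_index i < (x@y) ! unglue_index j"
    "(x@y) ! unglue_index k = (x@y) ! unglue_index i"
    "(x@y) ! unglue_index l = (x@y) ! unglue_index i"
    using h glue_ones_nth[of i] glue_ones_nth[of j] glue_ones_nth[of k] glue_ones_nth[of l] not1
    by auto
  ultimately show "has_1211 (x @ y)" unfolding has_1211_def by blast
qed (use has_patterns_glue_ones_lift in blast)

lemma avoids_glue_ones: "avoids (glue_ones x y) \<longleftrightarrow> avoids (x @ y) \<and> noninc y"
  unfolding avoids_def using rgf_from_glue_ones[OF pos] has_1123_glue_ones has_1211_glue_ones by auto

end

lemma noninc_suffix_glue_ones_Nil: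
  assumes ne: "x \<noteq> []" and pos: "\<forall>a\<in>set x. 1 \<le> a"
  shows "noninc_suffix (glue_ones x []) = Suc (noninc_suffix x)"
proof -
  have "1 \<le> hd x" using pos ne by simp
  then have "noninc_suffix (1 # map Suc x) = noninc_suffix (map Suc x)"
    using ne by (intro noninc_suffix_Cons_less) (auto simp: hd_map)
  moreover have "noninc_suffix ((1 # map Suc x) @ [1]) = Suc (noninc_suffix (1 # map Suc x))"
    by (rule noninc_suffix_snoc) auto
  ultimately show ?thesis by (simp add: glue_ones_def noninc_suffix_map_Suc)
qed

lemma noninc_suffix_glue_ones:
  assumes ne: "y \<noteq> []" and d: "noninc y" and pos: "\<forall>a\<in>set y. 1 \<le> a"
  shows "noninc_suffix (glue_ones x y) = length y"
proof -
  have "1 \<le> hd y" using pos ne by simp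
  then have "noninc_suffix ((1 # map Suc x @ [1]) @ map Suc y) = length (map Suc y)"
    using ne d by (intro noninc_suffix_append) (simp_all add: noninc_map_Suc hd_map)
  then show ?thesis by (simp add: glue_ones_def)
qed

lemma glue_ones_inj:
  assumes pos: "\<forall>a\<in>set (x @ y). 1 \<le> a" and eq: "glue_ones x y = glue_ones x' y'"
  shows "x = x' \<and> y = y'"
proof -
  have "map Suc x @ 1 # map Suc y = map Suc x' @ 1 # map Suc y'"
    using eq by (simp add: glue_ones_def)
  moreover have "1 \<notin> set (map Suc x)" "1 \<notin> set (map Suc y)" using pos by auto
  ultimately have "map Suc x = map Suc x' \<and> map Suc y = map Suc y'"
    using append_Cons_eq_iff[of 1 "map Suc x" "map Suc y" "map Suc x'" "map Suc y'"] by blast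
  then show ?thesis by (simp add: inj_map_eq_map)
qed

subsection \<open>Avoiders whose second letter is 1\<close>

text \<open>\<open>word12 n p q\<close> is \<open>1\<^sup>p 2\<dots>2\<close> of length \<open>n\<close> with one more 1 at position \<open>q\<close>; \<open>q = n\<close>
  encodes that there is none.\<close>

definition word12 :: "nat \<Rightarrow> nat \<Rightarrow> nat \<Rightarrow> nat list" where
  "word12 n p q = map (\<lambda>i. if i < p \<or> i = q then 1 else 2) [0..<n]"

definition word12_index :: "nat \<Rightarrow> (nat \<times> nat) set" where
  "word12_index n = {(p,q). 2 \<le> p \<and> p \<le> n \<and> (q = n \<or> (p < q \<and> q < n))}"

lemma finite_word12_index: "finite (word12_index n)"
  by (rule finite_subset[of _ "{..n} \<times> {..n}"]) (auto simp: word12_index_def)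

lemma word12_nth: "i < n \<Longrightarrow> word12 n p q ! i = (if i < p \<or> i = q then 1 else 2)"
  by (simp add: word12_def)

lemma length_word12: "length (word12 n p q) = n"
  by (simp add: word12_def)

lemma avoids_word12:
  assumes "(p,q) \<in> word12_index n"
  shows "avoids (word12 n p q)"
proof -
  let ?w = "word12 n p q"
  have pq: "2 \<le> p" "p \<le> n" "q = n \<or> (p < q \<and> q < n)" using assms by (auto simp: word12_index_def)
  have v12: "?w ! i = 1 \<or> ?w ! i = 2" if "i < n" for i using that by (simp add: word12_nth)
  have "?w = 1 # map (\<lambda>i. if i < p \<or> i = q then 1 else 2) [1..<n]"
    using pq by (simp add: word12_def upt_rec)
  then have "rgf_from 0 ?w" by (simp add: rgf_from_values_1_2 image_subset_iff)
  moreover have "\<not> has_1123 ?w"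
  proof
    assume "has_1123 ?w"
    then obtain i j k l where h: "i < j" "j < k" "k < l" "l < length ?w"
      "?w!j < ?w!k" "?w!k < ?w!l"
      unfolding has_1123_def by blast
    then have "j < n" "k < n" "l < n" by (auto simp: length_word12)
    then show False using h v12[of j] v12[of k] v12[of l] by auto
  qed
  moreover have "\<not> has_1211 ?w"
  proof
    assume "has_1211 ?w"
    then obtain i j k l where h: "i < j" "j < k" "k < l" "l < length ?w"
      "?w!i < ?w!j" "?w!k = ?w!i" "?w!l = ?w!i"
      unfolding has_1211_def by blast
    have n: "i < n" "j < n" "k < n" "l < n" using h(1-4) by (auto simp: length_word12)
    then have w1: "?w!i = 1" and w2: "?w!j = 2" using h(5) v12[of i] v12[of j] by auto
    \<comment> \<open>\<open>w!j = 2\<close> forces \<open>j \<ge> p\<close>, and after \<open>p\<close> only position \<open>q\<close> carries a 1\<close>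
    have "\<not> (j < p \<or> j = q)" using w2 word12_nth[OF n(2), of p q] by (simp split: if_splits)
    moreover have "k < p \<or> k = q" using h(6) w1 word12_nth[OF n(3), of p q]
      by (cases "k < p \<or> k = q") simp_all
    moreover have "l < p \<or> l = q" using h(7) w1 word12_nth[OF n(4), of p q]
      by (cases "l < p \<or> l = q") simp_all
    ultimately show False using h by auto
  qed
  ultimately show ?thesis by (simp add: avoids_def)
qed

lemma inj_on_word12: "inj_on (\<lambda>(p,q). word12 n p q) (word12_index n)"
proof (rule inj_onI, clarify)
  fix p q p' q' assume a: "(p,q) \<in> word12_index n" "(p',q') \<in> word12_index n"
    "word12 n p q = word12 n p' q'"
  have e: "(i < p \<or> i = q) = (i < p' \<or> i = q')" if "i < n" for i
  proof -
    have "word12 n p q ! i = word12 n p' q' ! i" using a(3) by (rule arg_cong)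
    then have "(if i < p \<or> i = q then 1 else 2::nat) = (if i < p' \<or> i = q' then 1 else 2)"
      unfolding word12_nth[OF that] .
    then show ?thesis by (auto split: if_splits)
  qed
  have pq: "2 \<le> p" "p \<le> n" "q = n \<or> (p < q \<and> q < n)"
    "2 \<le> p'" "p' \<le> n" "q' = n \<or> (p' < q' \<and> q' < n)"
    using a by (auto simp: word12_index_def)
  have "p = p'"
  proof (rule ccontr)
    assume "p \<noteq> p'"
    then show False
    proof (cases "p < p'")
      case True then show ?thesis using e[of p] pq by auto
    next
      case False then show ?thesis using e[of p'] pq \<open>p \<noteq> p'\<close> by auto
    qed
  qed
  moreover have "q = q'"
  proof (rule ccontr)
    assume "q \<noteq> q'"
    then show False
    proof (cases "q < q'")
      case True then show ?thesis using e[of q] pq \<open>p = p'\<close> by auto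
    next
      case False then show ?thesis using e[of q'] pq \<open>p = p'\<close> \<open>q \<noteq> q'\<close> by auto
    qed
  qed
  ultimately show "p = p' \<and> q = q'" by simp
qed

definition word12_suffix :: "nat \<Rightarrow> nat \<Rightarrow> nat \<Rightarrow> nat" where
  "word12_suffix n p q = (if p = n then n else if q < n - 1 then n - 1 - q else n - p)"

lemma noninc_map_upt:
  "noninc (map f [k..<n]) \<longleftrightarrow> (\<forall>i j. i < j \<longrightarrow> j < n - k \<longrightarrow> f (k + j) \<le> f (k + i))"
  by (simp add: noninc_def sorted_wrt_iff_nth_less)

lemma drop_word12: "drop k (word12 n p q) = map (\<lambda>i. if i < p \<or> i = q then 1 else 2) [k..<n]"
  by (simp add: word12_def drop_map)

lemma noninc_suffix_word12:
  assumes "(p,q) \<in> word12_index n"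
  shows "noninc_suffix (word12 n p q) = word12_suffix n p q"
proof -
  have pq: "2 \<le> p" "p \<le> n" "q = n \<or> (p < q \<and> q < n)" using assms by (auto simp: word12_index_def)
  consider "p = n" | "p < n" "q < n - 1" | "p < n" "\<not> q < n - 1" using pq by linarith
  then show ?thesis
  proof cases
    case 1
    then have "word12 n p q = replicate n 1" using pq
      by (intro nth_equalityI) (auto simp: word12_nth length_word12)
    then show ?thesis using 1 noninc_suffix_replicate[of n] by (simp add: word12_suffix_def)
  next
    case 2
    \<comment> \<open>the suffix consists of the 2s after the last 1\<close>
    have "noninc_suffix (word12 n p q) = n - Suc q"
      using 2 pq by (subst noninc_suffix_after_ascent[of "Suc q"])
        (auto simp: length_word12 word12_nth drop_word12 noninc_map_upt)
    then show ?thesis using 2 by (simp add: word12_suffix_def)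
  next
    case 3
    \<comment> \<open>the suffix starts at the first 2; a last letter 1 does not interrupt it\<close>
    have "noninc_suffix (word12 n p q) = n - p"
      using 3 pq by (subst noninc_suffix_after_ascent[of p])
        (auto simp: length_word12 word12_nth drop_word12 noninc_map_upt)
    then show ?thesis using 3 by (simp add: word12_suffix_def)
  qed
qed

lemma avoider_second_1_letters:
  assumes w: "w \<in> avoiders n" and w1: "w ! 1 = 1" and i: "i < n"
  shows "w ! i = 1 \<or> w ! i = 2"
proof (rule ccontr)
  have len: "length w = n" and r: "rgf_from 0 w" and no1123: "\<not> has_1123 w"
    using w by (auto simp: avoiders_def avoids_def)
  assume "\<not> (w ! i = 1 \<or> w ! i = 2)"
  moreover have "1 \<le> w ! i" using rgf_from_pos[OF r] i len by auto
  ultimately have big: "3 \<le> w ! i" by linarith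
  then obtain r where r2: "r \<le> i" "w ! r = 2" using rgf_from_0_value_occurs[OF r, of i 2] i len by auto
  have w0: "w ! 0 = 1" using rgf_from_0_hd[OF r] i len by (cases w) auto
  \<comment> \<open>the first two 1s, the first 2 and the letter \<open>w!i\<close> form a 1123\<close>
  have "r \<noteq> 0" using r2 w0 by (cases r) auto
  moreover have "r \<noteq> 1" "r \<noteq> i" using r2 w1 big by auto
  ultimately have "0 < (1::nat)" "1 < r" "r < i" "i < length w" using r2 i len by auto
  moreover have "w!0 = w!1" "w!1 < w!r" "w!r < w!i" using w0 w1 r2 big by auto
  ultimately have "has_1123 w" unfolding has_1123_def by blast
  then show False using no1123 by simp
qed

lemma avoider_second_1_eq_word12:
  assumes w: "w \<in> avoiders n" and n: "2 \<le> n" and w1: "w ! 1 = 1"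
  shows "\<exists>(p,q)\<in>word12_index n. w = word12 n p q"
proof -
  have len: "length w = n" and r: "rgf_from 0 w" and no1211: "\<not> has_1211 w"
    using w by (auto simp: avoiders_def avoids_def)
  have w0: "w ! 0 = 1" using rgf_from_0_hd[OF r] len n by (cases w) auto
  note val = avoider_second_1_letters[OF w w1]
  define p where "p = (LEAST i. i = n \<or> w!i = 2)"
  have p: "p = n \<or> w!p = 2" "p \<le> n" and P1: "\<And>i. i < p \<Longrightarrow> w!i = 1"
    using LeastI[of "\<lambda>i. i = n \<or> w!i = 2" n] Least_le[of "\<lambda>i. i = n \<or> w!i = 2" n]
      not_less_Least[of _ "\<lambda>i. i = n \<or> w!i = 2"] val
    unfolding p_def[symmetric] by (fastforce, fastforce, (metis less_le_trans not_le))
  have p2: "2 \<le> p" using w0 w1 p n by (cases "p = 0 \<or> p = 1") auto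
  define q where "q = (LEAST i. i = n \<or> (p < i \<and> w!i = 1))"
  have q: "q = n \<or> (p < q \<and> w!q = 1)" "q \<le> n"
    and Q2: "\<And>i. p < i \<Longrightarrow> i < q \<Longrightarrow> w!i = 2"
    using LeastI[of "\<lambda>i. i = n \<or> (p < i \<and> w!i = 1)" n]
      Least_le[of "\<lambda>i. i = n \<or> (p < i \<and> w!i = 1)" n]
      not_less_Least[of _ "\<lambda>i. i = n \<or> (p < i \<and> w!i = 1)"] val
    unfolding q_def[symmetric] by (fastforce, fastforce, (metis less_le_trans not_le))
  \<comment> \<open>a 1 after position \<open>q\<close> would complete the 1211 \<open>w!0, w!p, w!q, w!i\<close>\<close>
  have Q3: "w ! i = 2" if "q < i" "i < n" for i
  proof (rule ccontr)
    assume "w ! i \<noteq> 2"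
    then have "w ! i = 1" using val[OF that(2)] by simp
    moreover have "p < q" "w!q = 1" "w!p = 2" using q p that by auto
    ultimately have "has_1211 w"
      using p2 that len w0 unfolding has_1211_def
      by (intro exI[of _ 0] exI[of _ p] exI[of _ q] exI[of _ i]) auto
    then show False using no1211 by simp
  qed
  have "w = word12 n p q"
  proof (rule nth_equalityI)
    fix i assume "i < length w"
    then have i: "i < n" using len by simp
    consider "i < p" | "i = p" | "p < i" "i < q" | "i = q" "p < q" | "q < i" by linarith
    then show "w ! i = word12 n p q ! i"
      by cases (use i p q P1 Q2 Q3 in \<open>auto simp: word12_nth\<close>)
  qed (simp add: len length_word12)
  moreover have "(p, q) \<in> word12_index n" using p2 p q by (auto simp: word12_index_def)
  ultimately show ?thesis by blast
qed

subsection \<open>The decomposition of avoiders\<close>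

text \<open>\<open>glue_split v j\<close> cuts \<open>v\<close> before its last \<open>j\<close> letters and glues the two parts; the index
  set records the admissible cuts: the second part is non-increasing and the first is nonempty.\<close>

definition glue_split :: "nat list \<Rightarrow> nat \<Rightarrow> nat list" where
  "glue_split v j = glue_ones (take (length v - j) v) (drop (length v - j) v)"

definition glue_index :: "nat \<Rightarrow> (nat list \<times> nat) set" where
  "glue_index n = (SIGMA v:(avoiders (n-2) - {[]}). {0..min (noninc_suffix v) (length v - 1)})"

lemma finite_glue_index: "finite (glue_index n)"
  unfolding glue_index_def
  by (rule finite_SigmaI) (auto intro: finite_subset[OF _ finite_avoiders])

lemma glue_index_D:
  assumes "(v,j) \<in> glue_index n"
  shows "v \<in> avoiders (n-2)" "v \<noteq> []" "j \<le> noninc_suffix v" "j < length v"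
  using assms by (auto simp: glue_index_def, cases v, auto)

lemma glue_split_in_avoiders:
  assumes vj: "(v,j) \<in> glue_index n" and n: "2 \<le> n"
  shows "glue_split v j \<in> avoiders n"
proof -
  note v = glue_index_D[OF vj]
  let ?x = "take (length v - j) v" and ?y = "drop (length v - j) v"
  have pos: "\<forall>a\<in>set (?x @ ?y). 1 \<le> a" using avoiders_pos[OF v(1)] by simp
  have "noninc ?y" using noninc_drop_iff[of j v] v by simp
  moreover have "avoids v" using v by (simp add: avoiders_def)
  ultimately have "avoids (glue_ones ?x ?y)" using avoids_glue_ones[OF pos] by simp
  moreover have "length (glue_ones ?x ?y) = n" using length_glue_ones[OF pos] v n
    by (simp add: avoiders_def)
  ultimately show ?thesis by (simp add: avoiders_def glue_split_def)
qed

lemma map_Suc_map_pred: "\<forall>a\<in>set t. 1 \<le> a \<Longrightarrow> map Suc (map (\<lambda>a. a - 1) t) = t"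
  by (induction t) auto

lemma avoider_single_1:
  assumes w: "1 # t \<in> avoiders n" and t1: "1 \<notin> set t"
  shows "\<exists>v\<in>avoiders (n-1). t = map Suc v"
proof -
  have tpos: "\<forall>b\<in>set t. 1 \<le> b" using avoiders_pos[OF w] by simp
  define v where "v = map (\<lambda>a. a - 1) t"
  have tv: "map Suc v = t" using map_Suc_map_pred[OF tpos] by (simp add: v_def)
  have "\<forall>b\<in>set v. 1 \<le> b"
  proof
    fix b assume "b \<in> set v"
    then obtain c where c: "c \<in> set t" "b = c - 1" by (auto simp: v_def)
    then have "1 \<le> c" "c \<noteq> 1" using tpos t1 by auto
    then show "1 \<le> b" using c by simp
  qed
  then have "avoids v" using w avoids_Cons_Suc tv by (metis avoiders_def mem_Collect_eq)
  moreover have "length v = n - 1" using w by (auto simp: v_def avoiders_def)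
  ultimately show ?thesis using tv by (auto simp: avoiders_def)
qed

text \<open>A third 1 would complete the 1211 formed by the first two letters and the second 1.\<close>

lemma avoider_no_third_1:
  assumes w: "1 # xs @ 1 # zs \<in> avoiders n" and xs: "xs \<noteq> []" "1 \<notin> set xs"
  shows "1 \<notin> set zs"
proof
  let ?w = "1 # xs @ 1 # zs"
  assume "1 \<in> set zs"
  then obtain k where k: "k < length zs" "zs ! k = 1" by (auto simp: in_set_conv_nth)
  have x0: "xs ! 0 \<in> set xs" using xs by simp
  then have "xs ! 0 \<noteq> 1" using xs(2) by metis
  moreover have "1 \<le> xs ! 0" using x0 avoiders_pos[OF w] by auto
  ultimately have "?w!0 < ?w!1" using xs by (simp add: nth_append)
  moreover have "?w ! Suc (length xs) = 1" "?w ! (length xs + 2 + k) = 1" "?w ! 0 = 1"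
    using k by (simp_all add: nth_append)
  moreover have "1 < Suc (length xs)" "Suc (length xs) < length xs + 2 + k"
    "length xs + 2 + k < length ?w"
    using xs k by auto
  ultimately have "has_1211 ?w" unfolding has_1211_def
    by (intro exI[of _ 0] exI[of _ 1] exI[of _ "Suc (length xs)"] exI[of _ "length xs + 2 + k"])
      simp
  then show False using w by (simp add: avoiders_def avoids_def)
qed

lemma avoider_two_1s_eq_glue_split:
  assumes w: "1 # xs @ 1 # zs \<in> avoiders n"
    and xs: "xs \<noteq> []" "1 \<notin> set xs" and zs: "1 \<notin> set zs"
  shows "\<exists>(v,j)\<in>glue_index n. 1 # xs @ 1 # zs = glue_split v j"
proof -
  define x where "x = map (\<lambda>a. a - 1) xs"
  define y where "y = map (\<lambda>a. a - 1) zs"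
  have pos: "\<forall>b\<in>set (xs @ zs). 1 \<le> b" using avoiders_pos[OF w] by simp
  have xs_eq: "map Suc x = xs" and zs_eq: "map Suc y = zs"
    using map_Suc_map_pred[of xs] map_Suc_map_pred[of zs] pos by (simp_all add: x_def y_def)
  have wxy: "1 # xs @ 1 # zs = glue_ones x y" using xs_eq zs_eq by (simp add: glue_ones_def)
  have xypos: "\<forall>b\<in>set (x @ y). 1 \<le> b"
  proof
    fix b assume "b \<in> set (x @ y)"
    then have "Suc b \<in> set xs \<or> Suc b \<in> set zs" using xs_eq zs_eq by auto
    then have "Suc b \<noteq> 1" using xs(2) zs by metis
    then show "1 \<le> b" by simp
  qed
  have avy: "avoids (x @ y) \<and> noninc y"
    using avoids_glue_ones[OF xypos] w wxy by (simp add: avoiders_def)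
  moreover have "length (x @ y) = n - 2"
    using w by (auto simp: avoiders_def x_def y_def)
  ultimately have "x @ y \<in> avoiders (n-2)" by (simp add: avoiders_def)
  moreover have "x \<noteq> []" "length y \<le> length (x @ y) - 1" using xs x_def by (cases x, auto)+
  moreover have "length y \<le> noninc_suffix (x @ y)"
    using noninc_drop_iff[of "length y" "x @ y"] avy by simp
  ultimately have "(x @ y, length y) \<in> glue_index n" by (auto simp: glue_index_def)
  moreover have "glue_split (x @ y) (length y) = 1 # xs @ 1 # zs"
    using wxy by (simp add: glue_split_def)
  ultimately show ?thesis by force
qed

lemma avoider_second_not_1_cases:
  assumes w: "w \<in> avoiders n" and n: "2 \<le> n" and w1: "w ! 1 \<noteq> 1"
  shows "w \<in> (\<lambda>v. 1 # map Suc v) ` avoiders (n-1) \<union> (\<lambda>(v,j). glue_split v j) ` glue_index n"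
proof -
  have "length w = n" "rgf_from 0 w" using w by (auto simp: avoiders_def avoids_def)
  then obtain t where t: "w = 1 # t" using n rgf_from_0_hd by (cases w) auto
  show ?thesis
  proof (cases "1 \<in> set t")
    case False
    then show ?thesis using avoider_single_1 w t by blast
  next
    case True
    then obtain xs zs where tx: "t = xs @ 1 # zs" "1 \<notin> set xs"
      using split_list_first by metis
    moreover have "xs \<noteq> []" using w1 t tx by (cases xs) auto
    ultimately show ?thesis
      using avoider_two_1s_eq_glue_split avoider_no_third_1 w t by fastforce
  qed
qed

lemma avoiders_decomposition:
  assumes n: "2 \<le> n"
  shows "avoiders n = (\<lambda>v. 1 # map Suc v) ` avoiders (n-1)
    \<union> (\<lambda>(v,j). glue_split v j) ` glue_index n \<union> (\<lambda>(p,q). word12 n p q) ` word12_index n"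
proof
  show "avoiders n \<subseteq> (\<lambda>v. 1 # map Suc v) ` avoiders (n-1)
    \<union> (\<lambda>(v,j). glue_split v j) ` glue_index n \<union> (\<lambda>(p,q). word12 n p q) ` word12_index n"
    using avoider_second_not_1_cases[OF _ n] avoider_second_1_eq_word12[OF _ n] by blast
  have "1 # map Suc v \<in> avoiders n" if "v \<in> avoiders (n - 1)" for v
    using that n avoids_Cons_Suc[OF avoiders_pos[OF that]] by (auto simp: avoiders_def)
  then show "(\<lambda>v. 1 # map Suc v) ` avoiders (n-1)
    \<union> (\<lambda>(v,j). glue_split v j) ` glue_index n \<union> (\<lambda>(p,q). word12 n p q) ` word12_index n
    \<subseteq> avoiders n"
    using glue_split_in_avoiders[OF _ n] avoids_word12
    by (auto simp: avoiders_def length_word12)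
qed

lemma glue_split_parts:
  assumes "(v,j) \<in> glue_index n"
  shows "take (length v - j) v \<noteq> []"
    "\<forall>a\<in>set (take (length v - j) v @ drop (length v - j) v). 1 \<le> a"
  using glue_index_D[OF assms] avoiders_pos[of v "n-2"] by auto

lemma inj_on_glue_split: "inj_on (\<lambda>(v,j). glue_split v j) (glue_index n)"
proof (rule inj_onI, clarify)
  fix v j v' j' assume a: "(v,j) \<in> glue_index n" "(v',j') \<in> glue_index n"
    "glue_split v j = glue_split v' j'"
  then have "take (length v - j) v = take (length v' - j') v'"
    "drop (length v - j) v = drop (length v' - j') v'"
    using glue_ones_inj[OF glue_split_parts(2)[OF a(1)]] by (simp_all add: glue_split_def)
  moreover from this have "v = v'" by (metis append_take_drop_id)
  moreover have "j \<le> length v" "j' \<le> length v'" using glue_index_D a by fastforce+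
  ultimately show "v = v' \<and> j = j'" by (metis diff_diff_cancel length_drop)
qed

lemma sum_avoiders_decomposition:
  assumes n: "2 \<le> n"
  shows "(\<Sum>w\<in>avoiders n. g w) = (\<Sum>v\<in>avoiders (n-1). g (1 # map Suc v))
    + (\<Sum>(v,j)\<in>glue_index n. g (glue_split v j)) + (\<Sum>(p,q)\<in>word12_index n. g (word12 n p q))"
proof -
  let ?A = "(\<lambda>v. 1 # map Suc v) ` avoiders (n-1)" and ?B = "(\<lambda>(v,j). glue_split v j) ` glue_index n"
    and ?C = "(\<lambda>(p,q). word12 n p q) ` word12_index n"
  have fin: "finite ?A" "finite ?B" "finite ?C"
    using finite_avoiders finite_glue_index finite_word12_index by auto
  \<comment> \<open>the three shapes differ in the number of 1s and in the second letter\<close>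
  have A: "1 \<notin> set (tl w) \<and> w ! 1 \<noteq> 1" if w: "w \<in> ?A" for w
  proof -
    obtain v where v: "v \<in> avoiders (n-1)" "w = 1 # map Suc v" using w by blast
    then have "\<forall>a\<in>set v. 1 \<le> a" "v \<noteq> []" using avoiders_pos n by (auto simp: avoiders_def)
    then show ?thesis using v(2) by (auto simp: neq_Nil_conv)
  qed
  have B: "1 \<in> set (tl w) \<and> w ! 1 \<noteq> 1" if w: "w \<in> ?B" for w
  proof -
    obtain v j where vj: "(v,j) \<in> glue_index n" "w = glue_split v j" using w by auto
    obtain c cs where c: "take (length v - j) v = c # cs"
      using glue_split_parts(1)[OF vj(1)] by (cases "take (length v - j) v") auto
    then have "1 \<le> c" using glue_split_parts(2)[OF vj(1)] by auto
    then show ?thesis using c vj(2) by (simp add: glue_split_def glue_ones_def)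
  qed
  have C: "w ! 1 = 1" if "w \<in> ?C" for w
    using that n by (auto simp: word12_nth word12_index_def)
  have "(\<Sum>w\<in>avoiders n. g w) = sum g (?A \<union> ?B) + sum g ?C"
    unfolding avoiders_decomposition[OF n]
    by (rule sum.union_disjoint) (use fin A B C in fastforce)+
  also have "sum g (?A \<union> ?B) = sum g ?A + sum g ?B"
    by (rule sum.union_disjoint) (use fin A B in fastforce)+
  also have "sum g ?A = (\<Sum>v\<in>avoiders (n-1). g (1 # map Suc v))"
    by (rule sum.reindex_cong[where l="\<lambda>v. 1 # map Suc v"]) (auto simp: inj_on_def)
  also have "sum g ?B = (\<Sum>(v,j)\<in>glue_index n. g (glue_split v j))"
    by (rule sum.reindex_cong[OF inj_on_glue_split]) auto
  also have "sum g ?C = (\<Sum>(p,q)\<in>word12_index n. g (word12 n p q))"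
    by (rule sum.reindex_cong[OF inj_on_word12]) auto
  finally show ?thesis .
qed

subsection \<open>Series of power series\<close>

text \<open>\<open>fps_series Q\<close> is \<open>\<Sum>\<^sub>n X\<^sup>n Q\<^sub>n\<close>, which exists for every sequence \<open>Q\<close> of power series
  since only \<open>Q\<^sub>0, \<dots>, Q\<^sub>k\<close> contribute to the coefficient of \<open>X\<^sup>k\<close>.\<close>

definition fps_series :: "(nat \<Rightarrow> 'a::comm_ring_1 fps) \<Rightarrow> 'a fps" where
  "fps_series Q = Abs_fps (\<lambda>k. \<Sum>n\<le>k. Q n $ (k - n))"

lemma fps_series_nth: "fps_series Q $ k = (\<Sum>n\<le>k. Q n $ (k - n))"
  by (simp add: fps_series_def)

lemma fps_series_nth_eq_partial_sum:
  "k \<le> K \<Longrightarrow> fps_series Q $ k = (\<Sum>n\<le>K. fps_X^n * Q n) $ k"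
  unfolding fps_series_nth fps_sum_nth fps_X_power_mult_nth
  by (rule sym, rule sum.mono_neutral_cong_right) auto

lemma fps_series_add: "fps_series (\<lambda>n. P n + Q n) = fps_series P + fps_series Q"
  by (rule fps_ext) (simp add: fps_series_def sum.distrib)

lemma fps_series_diff: "fps_series (\<lambda>n. P n - Q n) = fps_series P - fps_series Q"
  by (rule fps_ext) (simp add: fps_series_def sum_subtractf)

lemma fps_series_convolution:
  "fps_series (\<lambda>n. \<Sum>i\<le>n. P i * Q (n - i)) = fps_series P * fps_series Q"
proof (rule fps_ext)
  fix k
  define g where "g i j = fps_X^(i+j) * (P i * Q j)" for i j
  define TP where "TP = (\<Sum>n\<le>k. fps_X^n * P n)"
  define TQ where "TQ = (\<Sum>n\<le>k. fps_X^n * Q n)"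
  have "fps_series (\<lambda>n. \<Sum>i\<le>n. P i * Q (n - i)) $ k
      = (\<Sum>N\<le>k. fps_X^N * (\<Sum>i\<le>N. P i * Q (N - i))) $ k"
    by (rule fps_series_nth_eq_partial_sum) simp
  also have "(\<Sum>N\<le>k. fps_X^N * (\<Sum>i\<le>N. P i * Q (N - i))) = (\<Sum>N\<le>k. \<Sum>i\<le>N. g i (N - i))"
    by (auto simp: g_def sum_distrib_left intro!: sum.cong)
  also have "\<dots> = (\<Sum>(i,j)\<in>{(i,j). i+j \<le> k}. g i j)"
    by (rule sum.triangle_reindex_eq[symmetric])
  also have "(\<Sum>(i,j)\<in>{(i,j). i+j \<le> k}. g i j) $ k = (\<Sum>(i,j)\<in>{..k}\<times>{..k}. g i j) $ k"
    unfolding fps_sum_nth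
    by (rule sum.mono_neutral_cong_left) (auto simp: g_def fps_X_power_mult_nth split: if_splits)
  also have "(\<Sum>(i,j)\<in>{..k}\<times>{..k}. g i j) = TP * TQ"
    unfolding TP_def TQ_def sum_product g_def sum.cartesian_product
    by (intro sum.cong refl) (auto simp: power_add mult_ac)
  also have "(TP * TQ) $ k = (\<Sum>i=0..k. TP $ i * TQ $ (k - i))" by (simp add: fps_mult_nth)
  also have "\<dots> = (\<Sum>i=0..k. fps_series P $ i * fps_series Q $ (k - i))"
    unfolding TP_def TQ_def
    by (intro sum.cong refl) (metis atLeastAtMost_iff diff_le_self fps_series_nth_eq_partial_sum)
  also have "\<dots> = (fps_series P * fps_series Q) $ k" by (simp add: fps_mult_nth)
  finally show "fps_series (\<lambda>n. \<Sum>i\<le>n. P i * Q (n - i)) $ k = (fps_series P * fps_series Q) $ k" .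
qed

lemma fps_series_single: "fps_series (\<lambda>n. if n = m then c else 0) = fps_X^m * c"
proof (rule fps_ext)
  fix k
  have "(\<Sum>n\<le>k. (if n = m then c else 0) $ (k - n)) = (\<Sum>n\<le>k. if n = m then c $ (k - n) else 0)"
    by (intro sum.cong) auto
  then show "fps_series (\<lambda>n. if n = m then c else 0) $ k = (fps_X^m * c) $ k"
    by (simp add: fps_series_def fps_X_power_mult_nth sum.delta)
qed

lemma fps_series_convolution_single:
  "fps_series (\<lambda>n. if n < m then 0 else c * Q (n - m)) = fps_X^m * c * fps_series Q"
proof -
  have eq: "(\<lambda>n. if n < m then 0 else c * Q (n - m))
      = (\<lambda>n. \<Sum>i\<le>n. (if i = m then c else 0) * Q (n - i))"
    by (auto simp: if_distrib[of "\<lambda>x. x * _"] sum.delta cong: if_cong)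
  show ?thesis
    unfolding eq fps_series_convolution[of "\<lambda>i. if i = m then c else 0" Q] fps_series_single ..
qed

lemma fps_series_cmult: "fps_series (\<lambda>n. c * Q n) = c * fps_series Q"
  using fps_series_convolution_single[of 0 c Q]
  by (simp only: not_less0 if_False diff_zero power_0 mult_1)

lemma fps_series_shift:
  "fps_series (\<lambda>n. if n < m then 0 else Q (n - m)) = fps_X^m * fps_series Q"
  using fps_series_convolution_single[of m 1 Q] by (simp only: mult_1 mult.right_neutral)

lemma fps_series_const: "fps_series (\<lambda>n. fps_const (a n)) = Abs_fps a"
  by (rule fps_ext) (simp add: fps_series_def sum.delta' cong: if_cong)

lemma fps_series_power: "(1 - fps_X * u) * fps_series (power u) = 1"
proof -
  have "fps_series (power u)
      = fps_series (\<lambda>m. (if m = 0 then 1 else 0) + (if m < 1 then 0 else u * u ^ (m - 1)))"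
    by (rule arg_cong[where f=fps_series]) (auto simp: power_eq_if)
  also have "\<dots> = 1 + fps_X * u * fps_series (power u)"
    by (simp only: fps_series_add fps_series_single fps_series_convolution_single) simp
  finally show ?thesis by (simp add: algebra_simps)
qed

subsection \<open>The recurrence refined by the non-increasing suffix\<close>

definition suffix_poly :: "'a::comm_ring_1 \<Rightarrow> nat \<Rightarrow> 'a" where
  "suffix_poly u n = (\<Sum>w\<in>avoiders n. u ^ noninc_suffix w)"

lemma suffix_poly_1: "suffix_poly u 1 = u"
  unfolding suffix_poly_def avoiders_1 by (simp add: noninc_suffix_singleton)

lemma noninc_suffix_Cons_Suc:
  assumes "v \<in> avoiders m" "1 \<le> m"
  shows "noninc_suffix (1 # map Suc v) = noninc_suffix v"
proof -
  have ne: "v \<noteq> []" using assms by (auto simp: avoiders_def)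
  then have "1 \<le> hd v" using avoiders_pos[OF assms(1)] by simp
  then have "noninc_suffix (1 # map Suc v) = noninc_suffix (map Suc v)"
    using ne by (intro noninc_suffix_Cons_less) (auto simp: hd_map)
  then show ?thesis by (simp add: noninc_suffix_map_Suc)
qed

lemma noninc_suffix_glue_split:
  assumes "(v,j) \<in> glue_index n"
  shows "noninc_suffix (glue_split v j) = (if j = 0 then Suc (noninc_suffix v) else j)"
proof -
  note v = glue_index_D[OF assms]
  have pos: "\<forall>a\<in>set v. 1 \<le> a" using avoiders_pos[OF v(1)] .
  show ?thesis
  proof (cases "j = 0")
    case True
    then show ?thesis using noninc_suffix_glue_ones_Nil[OF v(2) pos] by (simp add: glue_split_def)
  next
    case False
    let ?y = "drop (length v - j) v"
    have "?y \<noteq> []" using False v by simp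
    moreover have "noninc ?y" using noninc_drop_iff[of j v] v by simp
    moreover have "\<forall>a\<in>set ?y. 1 \<le> a" using pos by (auto dest: in_set_dropD)
    ultimately have "noninc_suffix (glue_split v j) = length ?y"
      unfolding glue_split_def by (rule noninc_suffix_glue_ones)
    then show ?thesis using False v by simp
  qed
qed

text \<open>The contribution of one avoider \<open>v\<close> of length \<open>m \<ge> 1\<close> with \<open>noninc_suffix v = d\<close> to
  the glued shape: the cut \<open>j = 0\<close> and the cuts \<open>1 \<le> j \<le> min d (m - 1)\<close>.\<close>

lemma glue_contribution:
  fixes u :: "'a::comm_ring_1"
  assumes "1 \<le> m" "d \<le> m"
  shows "(1 - u) * (u ^ Suc d + (\<Sum>j\<in>{1..min d (m - 1)}. u ^ j)) =
     u - u^2 * u ^ d - (if d = m then (1 - u) * u ^ m else 0)"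
proof -
  have geom: "(1 - u) * (\<Sum>j\<in>{1..k}. u ^ j) = u - u ^ Suc k" for k
  proof (cases k)
    case (Suc k')
    then show ?thesis using sum_gp_multiplied[of 1 k u] by simp
  qed simp
  have "(1 - u) * (u ^ Suc d + (\<Sum>j\<in>{1..min d (m - 1)}. u ^ j))
      = (1 - u) * u ^ Suc d + (1 - u) * (\<Sum>j\<in>{1..min d (m - 1)}. u ^ j)"
    by (simp add: distrib_left)
  also have "\<dots> = (1 - u) * u ^ Suc d + (u - u ^ Suc (min d (m - 1)))"
    by (simp only: geom)
  also have "\<dots> = u - u^2 * u ^ d - (if d = m then (1 - u) * u ^ m else 0)"
  proof (cases "d = m")
    case True
    then have "Suc (min d (m - 1)) = m" using assms by simp
    then show ?thesis using True by (simp add: algebra_simps power2_eq_square)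
  next
    case False
    then have "min d (m - 1) = d" using assms by simp
    then show ?thesis using False by (simp add: algebra_simps power2_eq_square)
  qed
  finally show ?thesis .
qed

lemma sum_glue_index:
  fixes u :: "'a::comm_ring_1"
  assumes n: "3 \<le> n"
  shows "(1 - u) * (\<Sum>(v,j)\<in>glue_index n. u ^ noninc_suffix (glue_split v j))
    = u * of_nat (card (avoiders (n-2))) - u^2 * suffix_poly u (n-2) - (1 - u) * u ^ (n - 2)"
proof -
  have ne: "avoiders (n-2) - {[]} = avoiders (n-2)" using n by (auto simp: avoiders_def)
  have "(\<Sum>(v,j)\<in>glue_index n. u ^ noninc_suffix (glue_split v j))
      = (\<Sum>(v,j)\<in>glue_index n. u ^ (if j = 0 then Suc (noninc_suffix v) else j))"
    by (rule sum.cong) (auto simp: noninc_suffix_glue_split)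
  also have "\<dots> = (\<Sum>v\<in>avoiders (n-2). \<Sum>j\<in>{0..min (noninc_suffix v) (length v - 1)}.
      u ^ (if j = 0 then Suc (noninc_suffix v) else j))"
    unfolding glue_index_def ne
    by (rule sum.Sigma[symmetric]) (auto intro: finite_avoiders)
  also have "\<dots> = (\<Sum>v\<in>avoiders (n-2).
      u ^ Suc (noninc_suffix v) + (\<Sum>j\<in>{1..min (noninc_suffix v) (length v - 1)}. u ^ j))"
    by (intro sum.cong refl, subst sum.atLeast_Suc_atMost) (auto intro!: sum.cong)
  finally have "(1 - u) * (\<Sum>(v,j)\<in>glue_index n. u ^ noninc_suffix (glue_split v j))
      = (\<Sum>v\<in>avoiders (n-2). (1 - u) *
          (u ^ Suc (noninc_suffix v) + (\<Sum>j\<in>{1..min (noninc_suffix v) (length v - 1)}. u ^ j)))"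
    by (simp add: sum_distrib_left)
  also have "\<dots> = (\<Sum>v\<in>avoiders (n-2). u - u^2 * u ^ noninc_suffix v
          - (if noninc_suffix v = n - 2 then (1 - u) * u ^ (n - 2) else 0))"
  proof (intro sum.cong refl)
    fix v assume "v \<in> avoiders (n-2)"
    then have "length v = n - 2" by (simp add: avoiders_def)
    then show "(1 - u) * (u ^ Suc (noninc_suffix v)
        + (\<Sum>j\<in>{1..min (noninc_suffix v) (length v - 1)}. u ^ j))
      = u - u^2 * u ^ noninc_suffix v
        - (if noninc_suffix v = n - 2 then (1 - u) * u ^ (n - 2) else 0)"
      using glue_contribution[of "n - 2" "noninc_suffix v" u] n noninc_suffix_le[of v] by simp
  qed
  also have "\<dots> = (\<Sum>v\<in>avoiders (n-2). u) - (\<Sum>v\<in>avoiders (n-2). u^2 * u ^ noninc_suffix v)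
      - (\<Sum>v\<in>avoiders (n-2). if noninc_suffix v = n - 2 then (1 - u) * u ^ (n - 2) else 0)"
    by (simp add: sum_subtractf)
  also have "(\<Sum>v\<in>avoiders (n-2). if noninc_suffix v = n - 2 then (1 - u) * u ^ (n - 2) else 0)
      = (1 - u) * u ^ (n - 2)"
    unfolding sum.inter_filter[OF finite_avoiders, symmetric] avoiders_with_full_noninc_suffix
    by simp
  finally show ?thesis by (simp add: suffix_poly_def sum_distrib_left mult.commute)
qed

definition word12_poly :: "'a::comm_ring_1 \<Rightarrow> nat \<Rightarrow> 'a" where
  "word12_poly u n = (\<Sum>(p,q)\<in>word12_index n. u ^ word12_suffix n p q)"

lemma suffix_poly_recurrence:
  fixes u :: "'a::comm_ring_1"
  assumes n: "2 \<le> n"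
  shows "(1 - u) * suffix_poly u n = (1 - u) * suffix_poly u (n - 1)
     + (if 3 \<le> n then u * of_nat (card (avoiders (n-2))) - u^2 * suffix_poly u (n-2)
          - (1 - u) * u ^ (n - 2) else 0)
     + (1 - u) * word12_poly u n"
proof -
  have "suffix_poly u n = suffix_poly u (n - 1)
      + (\<Sum>(v,j)\<in>glue_index n. u ^ noninc_suffix (glue_split v j)) + word12_poly u n"
    unfolding suffix_poly_def word12_poly_def sum_avoiders_decomposition[OF n] using n
    using noninc_suffix_Cons_Suc[of _ "n-1"] noninc_suffix_word12
    by (intro arg_cong2[where f="(+)"] sum.cong refl) auto
  moreover have "glue_index n = {}" if "\<not> 3 \<le> n"
    using that n by (simp add: glue_index_def avoiders_0)
  ultimately show ?thesis using sum_glue_index[of n u] n by (auto simp: algebra_simps)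
qed

lemma word12_index_split:
  assumes "2 \<le> n"
  shows "word12_index n = insert (n,n) ((\<lambda>p. (p,n)) ` {2..<n} \<union> (\<lambda>p. (p,n-1)) ` {2..<n-1}
            \<union> (\<lambda>(q,p). (p,q)) ` (SIGMA q:{3..<n-1}. {2..<q}))"
  using assms by (auto simp: word12_index_def image_iff)

lemma word12_poly_explicit:
  fixes u :: "'a::comm_ring_1"
  assumes n: "2 \<le> n"
  shows "word12_poly u n = u ^ n + (\<Sum>p\<in>{2..<n}. u ^ (n - p)) + (\<Sum>p\<in>{2..<n-1}. u ^ (n - p))
     + (\<Sum>q\<in>{3..<n-1}. of_nat (q - 2) * u ^ (n - 1 - q))"
proof -
  let ?A = "(\<lambda>p. (p,n)) ` {2..<n}" and ?B = "(\<lambda>p. (p,n-1)) ` {2..<n-1}"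
    and ?C = "(\<lambda>(q,p). (p,q)) ` (SIGMA q:{3..<n-1}. {2..<q})"
  let ?g = "\<lambda>(p,q). u ^ word12_suffix n p q"
  have fin: "finite ?A" "finite ?B" "finite ?C" by auto
  have "word12_poly u n = ?g (n,n) + sum ?g ?A + sum ?g ?B + sum ?g ?C"
    unfolding word12_poly_def word12_index_split[OF n] using fin
    by (subst sum.insert, auto, subst sum.union_disjoint, auto, subst sum.union_disjoint, auto)
  also have "sum ?g ?A = (\<Sum>p\<in>{2..<n}. u ^ (n - p))"
    by (subst sum.reindex) (auto simp: inj_on_def word12_suffix_def intro!: sum.cong)
  also have "sum ?g ?B = (\<Sum>p\<in>{2..<n-1}. u ^ (n - p))"
    by (subst sum.reindex) (auto simp: inj_on_def word12_suffix_def intro!: sum.cong)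
  also have "sum ?g ?C = (\<Sum>(q,p)\<in>(SIGMA q:{3..<n-1}. {2..<q}). u ^ (n - 1 - q))"
    by (subst sum.reindex) (auto simp: inj_on_def word12_suffix_def intro!: sum.cong)
  also have "\<dots> = (\<Sum>q\<in>{3..<n-1}. of_nat (q - 2) * u ^ (n - 1 - q))"
    by (subst sum.Sigma[symmetric]) auto
  finally show ?thesis by (simp add: word12_suffix_def)
qed

definition pos_power :: "'a::comm_ring_1 \<Rightarrow> nat \<Rightarrow> 'a" where
  "pos_power u m = (if m = 0 then 0 else u ^ m)"

text \<open>The three sums of \<open>word12_poly_explicit\<close> as convolutions, so that their series factor.\<close>

lemma word12_poly_convolution:
  fixes u :: "'a::comm_ring_1"
  shows "word12_poly u n = (if 2 \<le> n then u ^ n else 0)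
     + (\<Sum>i\<le>n. (if 2 \<le> i then 1 else 0) * pos_power u (n - i))
     + (\<Sum>i\<le>n. (if 3 \<le> i then 1 else 0) * (u * pos_power u (n - i)))
     + (\<Sum>i\<le>n. of_nat (i - 3) * pos_power u (n - i))"
proof (cases "2 \<le> n")
  case False
  then have "word12_index n = {}" by (auto simp: word12_index_def)
  then show ?thesis using False by (auto simp: word12_poly_def intro!: sum.neutral)
next
  case True
  have p1: "(\<Sum>i\<le>n. (if 2 \<le> i then 1 else 0) * pos_power u (n - i)) = (\<Sum>p\<in>{2..<n}. u ^ (n - p))"
    by (rule sum.mono_neutral_cong_right) (auto simp: pos_power_def)
  have "(\<Sum>i\<le>n. (if 3 \<le> i then 1 else 0) * (u * pos_power u (n - i)))
      = (\<Sum>i\<in>{2+1..<(n-1)+1}. u * u ^ (n - i))"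
    using True by (intro sum.mono_neutral_cong_right) (auto simp: pos_power_def)
  also have "\<dots> = (\<Sum>p\<in>{2..<n-1}. u ^ (n - p))"
    unfolding sum.shift_bounds_nat_ivl
    by (intro sum.cong refl) (auto simp flip: power_Suc simp: Suc_diff_Suc)
  finally have p2: "(\<Sum>i\<le>n. (if 3 \<le> i then 1 else 0) * (u * pos_power u (n - i)))
      = (\<Sum>p\<in>{2..<n-1}. u ^ (n - p))" .
  have "(\<Sum>i\<le>n. of_nat (i - 3) * pos_power u (n - i))
      = (\<Sum>i\<in>{3+1..<(n-1)+1}. of_nat (i - 3) * u ^ (n - i))"
    using True by (intro sum.mono_neutral_cong_right) (auto simp: pos_power_def)
  also have "\<dots> = (\<Sum>q\<in>{3..<n-1}. of_nat (q - 2) * u ^ (n - 1 - q))"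
    unfolding sum.shift_bounds_nat_ivl by (intro sum.cong) auto
  finally have p3: "(\<Sum>i\<le>n. of_nat (i - 3) * pos_power u (n - i))
      = (\<Sum>q\<in>{3..<n-1}. of_nat (q - 2) * u ^ (n - 1 - q))" .
  show ?thesis unfolding word12_poly_explicit[OF True] p1 p2 p3 using True by simp
qed

definition fps_ones :: "'a::comm_ring_1 fps" where
  "fps_ones = Abs_fps (\<lambda>_. 1)"

lemma one_minus_X_mult_fps_ones: "(1 - fps_X) * fps_ones = 1"
  by (rule fps_ext) (simp add: fps_ones_def algebra_simps fps_mult_nth_conv_upto_subdegree_left)

lemma fps_series_indicator:
  "fps_series (\<lambda>i. if k \<le> i then 1 else 0) = fps_X^k * (fps_ones :: 'a::comm_ring_1 fps)"
proof -
  have "fps_series (\<lambda>i. if k \<le> i then 1 else 0 :: 'a fps)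
      = fps_series (\<lambda>i. fps_const (if k \<le> i then 1 else 0))"
    by (rule arg_cong[where f=fps_series]) auto
  also have "\<dots> = fps_X^k * fps_ones"
    unfolding fps_series_const by (rule fps_ext) (simp add: fps_X_power_mult_nth fps_ones_def)
  finally show ?thesis .
qed

lemma fps_series_of_nat_minus:
  "fps_series (\<lambda>i. of_nat (i - k)) = fps_X^Suc k * (fps_ones * (fps_ones :: 'a::comm_ring_1 fps))"
proof -
  have "fps_series (\<lambda>i. of_nat (i - k) :: 'a fps) = fps_series (\<lambda>i. fps_const (of_nat (i - k)))"
    by (rule arg_cong[where f=fps_series]) (auto simp: fps_of_nat)
  also have "\<dots> = fps_X^Suc k * (fps_ones * fps_ones)"
  proof -
    have "(fps_ones * fps_ones :: 'a fps) $ n = of_nat (n + 1)" for n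
      by (simp add: fps_mult_nth fps_ones_def)
    then show ?thesis
      unfolding fps_series_const
      by (intro fps_ext) (simp only: fps_X_power_mult_nth fps_nth_Abs_fps, simp add: Suc_diff_Suc)
  qed
  finally show ?thesis .
qed

lemma fps_series_pos_power: "fps_series (pos_power u) = fps_X * u * fps_series (power u)"
proof -
  have "pos_power u = (\<lambda>m. if m < 1 then 0 else u * u ^ (m - 1))"
    by (auto simp: pos_power_def power_eq_if)
  then show ?thesis by (simp only: fps_series_convolution_single power_one_right)
qed

lemma word12_gf_closed_form:
  fixes u :: "real fps"
  shows "(1 - fps_X)^3 * (1 - fps_X * u) * fps_series (word12_poly u)
    = (1 - fps_X)^3 * fps_X^2 * u^2 + (1 - fps_X)^2 * fps_X^3 * u
      + (1 - fps_X)^2 * fps_X^4 * u^2 + (1 - fps_X) * fps_X^5 * u"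
proof -
  define G where "G = fps_series (power u)"
  have sq: "(\<lambda>n. if 2 \<le> n then u ^ n else 0) = (\<lambda>n. if n < 2 then 0 else u^2 * u ^ (n - 2))"
  proof
    fix n :: nat
    show "(if 2 \<le> n then u ^ n else 0) = (if n < 2 then 0 else u^2 * u ^ (n - 2))"
    proof (cases "n < 2")
      case False
      then have "n = 2 + (n - 2)" by simp
      then have "u ^ n = u^2 * u ^ (n - 2)" by (metis power_add)
      then show ?thesis using False by simp
    qed simp
  qed
  have "fps_series (\<lambda>n. if 2 \<le> n then u ^ n else 0) = fps_X^2 * u^2 * G"
    unfolding sq G_def by (rule fps_series_convolution_single)
  moreover have "fps_series (\<lambda>n. \<Sum>i\<le>n. (if 2 \<le> i then 1 else 0) * pos_power u (n - i))
      = (fps_X^2 * fps_ones) * (fps_X * u * G)"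
    using fps_series_convolution[of "\<lambda>i. if 2 \<le> i then 1 else 0" "pos_power u"]
    by (simp only: fps_series_indicator fps_series_pos_power G_def)
  moreover have "fps_series (\<lambda>n. \<Sum>i\<le>n. (if 3 \<le> i then 1 else 0) * (u * pos_power u (n - i)))
      = (fps_X^3 * fps_ones) * (u * (fps_X * u * G))"
    using fps_series_convolution[of "\<lambda>i. if 3 \<le> i then 1 else 0" "\<lambda>m. u * pos_power u m"]
    by (simp only: fps_series_indicator fps_series_cmult fps_series_pos_power G_def)
  moreover have "fps_series (\<lambda>n. \<Sum>i\<le>n. of_nat (i - 3) * pos_power u (n - i))
      = (fps_X^4 * (fps_ones * fps_ones)) * (fps_X * u * G)"
    using fps_series_convolution[of "\<lambda>i. of_nat (i - 3)" "pos_power u"]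
      fps_series_of_nat_minus[of 3, where 'a=real]
    by (simp only: fps_series_pos_power G_def Suc_numeral semiring_norm(2,8))
  ultimately have Z: "fps_series (word12_poly u) = fps_X^2 * u^2 * G
      + (fps_X^2 * fps_ones) * (fps_X * u * G)
      + (fps_X^3 * fps_ones) * (u * (fps_X * u * G))
      + (fps_X^4 * (fps_ones * fps_ones)) * (fps_X * u * G)"
    unfolding word12_poly_convolution[abs_def] fps_series_add by simp
  have "(1 - fps_X * u) * G = 1" using fps_series_power[of u] by (simp add: G_def)
  then show ?thesis using one_minus_X_mult_fps_ones[where 'a=real] unfolding Z by algebra
qed

subsection \<open>The kernel method\<close>

definition suffix_poly_pos :: "'a::comm_ring_1 \<Rightarrow> nat \<Rightarrow> 'a" where
  "suffix_poly_pos u n = (if n = 0 then 0 else suffix_poly u n)"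

definition avoider_count_pos :: "nat \<Rightarrow> 'a::comm_ring_1" where
  "avoider_count_pos n = (if n = 0 then 0 else of_nat (card (avoiders n)))"

lemma suffix_poly_pos_recurrence:
  fixes u :: "'a::comm_ring_1"
  shows "(1 - u) * suffix_poly_pos u n
    = (1 - u) * (if n = 1 then u else 0) + (1 - u) * (if n < 1 then 0 else suffix_poly_pos u (n - 1))
      + (if n < 2 then 0 else u * avoider_count_pos (n - 2) - u^2 * suffix_poly_pos u (n - 2)
           - (1 - u) * pos_power u (n - 2))
      + (1 - u) * word12_poly u n"
proof -
  have "word12_index m = {}" if "m < 2" for m using that by (auto simp: word12_index_def)
  then have small: "word12_poly u m = 0" if "m < 2" for m using that by (simp add: word12_poly_def)
  consider "n = 0" | "n = 1" | "n = 2" | "3 \<le> n" by linarith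
  then show ?thesis
  proof cases
    case 3
    then show ?thesis using suffix_poly_recurrence[of 2 u]
      by (simp add: suffix_poly_pos_def avoider_count_pos_def pos_power_def suffix_poly_1)
  next
    case 4
    then show ?thesis using suffix_poly_recurrence[of n u]
      by (simp add: suffix_poly_pos_def avoider_count_pos_def pos_power_def)
  qed (use small[of 0] small[of 1] suffix_poly_1[of u] in \<open>simp_all add: suffix_poly_pos_def\<close>)
qed

lemma refined_gf_equation:
  fixes u :: "real fps"
  defines "P \<equiv> fps_series (suffix_poly_pos u)" and "N \<equiv> fps_series avoider_count_pos"
    and "G \<equiv> fps_series (power u)" and "W \<equiv> fps_series (word12_poly u)"
  shows "(1 - u) * P = (1 - u) * (fps_X * u) + (1 - u) * (fps_X * P)
    + fps_X^2 * (u * N - u^2 * P - (1 - u) * (fps_X * u * G)) + (1 - u) * W"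
proof -
  have "fps_series (\<lambda>n. (1 - u) * suffix_poly_pos u n) = fps_series (\<lambda>n.
      (1 - u) * (if n = 1 then u else 0) + (1 - u) * (if n < 1 then 0 else suffix_poly_pos u (n - 1))
      + (if n < 2 then 0 else u * avoider_count_pos (n - 2) - u^2 * suffix_poly_pos u (n - 2)
           - (1 - u) * pos_power u (n - 2))
      + (1 - u) * word12_poly u n)"
    by (rule arg_cong[where f=fps_series], rule ext, rule suffix_poly_pos_recurrence)
  also have "\<dots> = (1 - u) * (fps_X * u) + (1 - u) * (fps_X * P)
    + fps_X^2 * (u * N - u^2 * P - (1 - u) * (fps_X * u * G)) + (1 - u) * W"
    using fps_series_shift[of 2 "\<lambda>m. u * avoider_count_pos m - u^2 * suffix_poly_pos u m
        - (1 - u) * pos_power u m"]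
      fps_series_shift[of 1 "suffix_poly_pos u"]
    unfolding fps_series_add fps_series_cmult fps_series_single
      fps_series_diff fps_series_pos_power P_def N_def G_def W_def
    by (simp add: mult.assoc)
  finally show ?thesis by (simp add: fps_series_cmult P_def)
qed

text \<open>On the kernel \<open>(1 - X)(1 - u) + X\<^sup>2u\<^sup>2 = 0\<close> the refined series drops out.\<close>

lemma avoider_gf_on_kernel:
  fixes u :: "real fps"
  assumes K: "(1 - fps_X) * (1 - u) + u^2 * fps_X^2 = 0"
  shows "fps_X^2 * u * fps_series avoider_count_pos = - (1 - u) * fps_X * u
    + (1 - u) * fps_X^3 * u * fps_series (power u) - (1 - u) * fps_series (word12_poly u)"
  using refined_gf_equation[of u] K by algebra

lemma avoider_gf_on_kernel_cleared:
  fixes u :: "real fps"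
  assumes K: "(1 - fps_X) * (1 - u) + u^2 * fps_X^2 = 0"
  defines "X \<equiv> fps_X :: real fps"
  shows "(1 - X)^3 * (1 - X * u) * (X^2 * u * fps_series avoider_count_pos)
    = (1 - X)^3 * (1 - X * u) * (- (1 - u) * X * u) + (1 - u) * X^3 * u * (1 - X)^3
      - (1 - u) * ((1 - X)^3 * X^2 * u^2 + (1 - X)^2 * X^3 * u
                   + (1 - X)^2 * X^4 * u^2 + (1 - X) * X^5 * u)"
proof -
  have "(1 - X)^3 * (1 - X * u) * (X^2 * u * fps_series avoider_count_pos)
      = (1 - X)^3 * (1 - X * u) * (- (1 - u) * X * u)
        + (1 - u) * X^3 * u * (1 - X)^3 * ((1 - X * u) * fps_series (power u))
        - (1 - u) * ((1 - X)^3 * (1 - X * u) * fps_series (word12_poly u))"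
    using avoider_gf_on_kernel[OF K] unfolding X_def by algebra
  then show ?thesis using fps_series_power[of u] word12_gf_closed_form[of u] by (simp add: X_def)
qed

lemma avoider_gf_identity:
  fixes u :: "real fps"
  assumes K: "(1 - fps_X) * (1 - u) + u^2 * fps_X^2 = 0"
  shows "fps_const 2 * fps_X^2 * (1 - fps_X)^2 * (1 - 3 * fps_X + fps_X^2)
        * (1 + fps_series avoider_count_pos)
      = (1 - fps_X)^2 * (1 - fps_X^2) * (1 - fps_X - 2 * fps_X^2 * u)
        - (1 - 3 * fps_X - 2 * fps_X^2 + 14 * fps_X^3 - 15 * fps_X^4 + 3 * fps_X^5)"
proof -
  define X :: "real fps" where "X = fps_X"
  define N :: "real fps" where "N = fps_series avoider_count_pos"
  define A where "A = 2 * X^2 * (1 - X)^2 * (1 - 3 * X + X^2)"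
  define B where "B = (1 - X)^2 * (1 - X^2) * (1 - X - 2 * X^2 * u)
    - (1 - 3 * X - 2 * X^2 + 14 * X^3 - 15 * X^4 + 3 * X^5)"
  have K': "(1 - X) * (1 - u) + u^2 * X^2 = 0" using K by (simp add: X_def)
  note cleared = avoider_gf_on_kernel_cleared[OF K, folded X_def N_def]
  \<comment> \<open>what remains is a polynomial identity in \<open>X\<close> and \<open>u\<close> modulo the kernel\<close>
  have "X^2 * u * (1 - X)^3 * (1 - X * u) * (A * (1 + N) - B)
      = X^2 * u * (1 - X)^3 * (1 - X * u) * (A - B) + A * ((1 - X)^3 * (1 - X * u) * (X^2 * u * N))"
    by (simp add: algebra_simps)
  also have "\<dots> = ((1 - X) * (1 - u) + u^2 * X^2) * (- 2*X^3*u + 12*X^4*u - 32*X^5*u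
      + 48*X^6*u - 42*X^7*u + 20*X^8*u - 4*X^9*u)"
    unfolding cleared A_def B_def by algebra
  also have "\<dots> = 0" by (simp only: K' mult_zero_left)
  finally have "X^2 * u * (1 - X)^3 * (1 - X * u) * (A * (1 + N) - B) = 0" .
  moreover have "(1 - X) $ 0 \<noteq> 0" "(1 - X * u) $ 0 \<noteq> 0" by (simp_all add: X_def)
  then have "1 - X \<noteq> 0" "1 - X * u \<noteq> 0" by (metis fps_zero_nth)+
  moreover have "u \<noteq> 0" using K' \<open>1 - X \<noteq> 0\<close> by auto
  ultimately have "A * (1 + N) = B" by (simp add: X_def)
  then show ?thesis by (simp add: A_def B_def N_def X_def fps_numeral_fps_const)
qed

lemma kernel_root_from_radical:
  obtains u :: "real fps" where
    "fps_radical (\<lambda>k x. root k x) 2 ((1 - fps_X) * (1 - fps_X - 4 * fps_X ^ 2))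
       = 1 - fps_X - 2 * fps_X^2 * u"
    "(1 - fps_X) * (1 - u) + u^2 * fps_X^2 = 0"
proof -
  define X :: "real fps" where "X = fps_X"
  define R :: "real fps" where "R = (1 - X) * (1 - X - 4 * X ^ 2)"
  define S where "S = fps_radical (\<lambda>k x. root k x) 2 R"
  have R0: "R $ 0 = 1" by (simp add: R_def X_def)
  have S2: "S ^ 2 = R"
    using power_radical[of R "\<lambda>k x. root k x" 1] R0 by (simp add: S_def numeral_2_eq_2)
  have S0: "S $ 0 = 1" using R0 by (simp add: S_def)
  have "2 * S $ 1 = -2"
    using arg_cong[OF S2, of "\<lambda>f. f $ 1"] S0
    by (simp add: power2_eq_square fps_mult_nth_1 R_def X_def algebra_simps)
  then have S1: "S $ 1 = -1" by simp
  \<comment> \<open>\<open>S\<close> starts with \<open>1 - X\<close>; the rest defines \<open>u\<close>\<close>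
  define u where "u = Abs_fps (\<lambda>n. - S $ (n + 2) / 2)"
  have Su: "S = 1 - X - 2 * X^2 * u"
  proof (rule fps_ext)
    fix n
    have e: "1 - X - 2 * X^2 * u = 1 - X - X^2 * (fps_const 2 * u)"
      by (simp add: fps_numeral_fps_const mult.assoc mult.left_commute)
    have c: "(X^2 * (fps_const 2 * u)) $ n = (if n < 2 then 0 else 2 * u $ (n - 2))"
      by (simp add: X_def fps_X_power_mult_nth)
    show "S $ n = (1 - X - 2 * X^2 * u) $ n"
    proof (cases "n < 2")
      case True
      then have "n = 0 \<or> n = 1" by auto
      then show ?thesis unfolding e using c S0 S1 by (auto simp: X_def)
    next
      case False
      then have "S $ n = - 2 * u $ (n - 2)" by (simp add: u_def numeral_2_eq_2 Suc_diff_Suc)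
      then show ?thesis unfolding e using c False by (simp add: X_def)
    qed
  qed
  have "X^2 * (4 * ((1 - X) * (1 - u) + u^2 * X^2)) = S^2 - R"
    unfolding Su R_def by algebra
  then have "X^2 * (4 * ((1 - X) * (1 - u) + u^2 * X^2)) = 0" using S2 by simp
  moreover have "X^2 \<noteq> 0" by (simp add: X_def)
  moreover have "(4::real fps) $ 0 \<noteq> 0" by simp
  then have "(4::real fps) \<noteq> 0" by (metis fps_zero_nth)
  ultimately have "(1 - X) * (1 - u) + u^2 * X^2 = 0" by (metis mult_eq_0_iff)
  then show ?thesis using that Su unfolding S_def R_def X_def by blast
qed

lemma avoider_gf_eq:
  "Abs_fps (\<lambda>n. real (pcount n {[1,1,2,3], [1,2,1,1]})) = 1 + fps_series avoider_count_pos"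
proof -
  have "fps_series avoider_count_pos
      = fps_series (\<lambda>n. fps_const (if n = 0 then 0 else real (card (avoiders n))))"
    by (rule arg_cong[where f=fps_series]) (auto simp: avoider_count_pos_def fps_of_nat)
  then show ?thesis
    by (intro fps_ext) (simp add: fps_series_const pcount_eq_card_avoiders[simplified] avoiders_0)
qed

theorem theorem4p22:
  fixes F :: "real fps"
  defines "F \<equiv> Abs_fps (\<lambda>n. real (pcount n {[1,1,2,3], [1,2,1,1]}))"
  shows "fps_const 2 * fps_X ^ 2 * (1 - fps_X) ^ 2 * (1 - 3 * fps_X + fps_X ^ 2) * F
         = (1 - fps_X) ^ 2 * (1 - fps_X ^ 2) *
             fps_radical (\<lambda>k x. root k x) 2 ((1 - fps_X) * (1 - fps_X - 4 * fps_X ^ 2))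
           - (1 - 3 * fps_X - 2 * fps_X ^ 2 + 14 * fps_X ^ 3 - 15 * fps_X ^ 4 + 3 * fps_X ^ 5)"
proof -
  obtain u :: "real fps" where
    S: "fps_radical (\<lambda>k x. root k x) 2 ((1 - fps_X) * (1 - fps_X - 4 * fps_X ^ 2))
       = 1 - fps_X - 2 * fps_X^2 * u" and
    K: "(1 - fps_X) * (1 - u) + u^2 * fps_X^2 = 0"
    by (rule kernel_root_from_radical)
  show ?thesis
    unfolding F_def avoider_gf_eq S by (rule avoider_gf_identity[OF K])
qed

end
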